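(* Let $\mathscr{F}$ be a family of languages closed under union, rational transduction, product and Kleene closure. Let $S$ be a finitely generated completely zero-simple semigroup. Then the following are equivalent: (1) $S$ has loop problem in $\mathscr{F}$; (2) some non-zero maximal subgroup of $S$ has loop problem in $\mathscr{F}$; (3) every non-zero maximal subgroup of $S$ has loop problem in $\mathscr{F}$.
   Context: A semigroup $S$ with zero $0$ is completely zero-simple if $S^2 \neq \{0\}$, its only ideals are $\{0\}$ and $S$, and it contains a primitive idempotent (a nonzero idempotent $e$ such that the only nonzero idempotent $f$ with $ef = fe = f$ is $e$). A non-zero maximal subgroup is a maximal subgroup not equal to $\{0\}$. For a semigroup $S$, $S^1$ denotes the monoid obtained by adjoining a new identity $1$ (even if $S$ already has one). A choice of generators for $S$ is a surjective morphism $\sigma : X^+ \to S$ from a free semigroup, finite if $X$ is finite; it extends uniquely to $\sigma^1 : X^* \to S^1$. Let $\overline{X} = \{\overline{x} : x \in X\}$ be a set of formal inverses, $\hat{X} = X \cup \overline{X}$. The loop automaton of $S$ with respect to $\sigma$ is the directed labelled graph with vertex set $S^1$, having for each $a \in S^1$ and $x \in X$ an edge from $a$ to $a(x\sigma)$ labelled $x$ and an edge from $a(x\sigma)$ to $a$ labelled $\overline{x}$. The loop problem $L_\sigma(S) \subseteq \hat{X}^*$ is the set of words labelling paths from $1$ to $1$ in this graph (including the empty word). A finitely generated semigroup (in particular a group, viewed as a semigroup) "has loop problem in $\mathscr{F}$" if $L_\sigma \in \mathscr{F}$ for every finite choice of generators $\sigma$. A rational transduction is a relation between free monoids realised by a finite-state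 transducer. *)

theory Defs
  imports Main
begin

definition semigroup_on :: "'a set \<Rightarrow> ('a \<Rightarrow> 'a \<Rightarrow> 'a) \<Rightarrow> bool" where
  "semigroup_on S f \<longleftrightarrow>
     (\<forall>x\<in>S. \<forall>y\<in>S. f x y \<in> S) \<and>
     (\<forall>x\<in>S. \<forall>y\<in>S. \<forall>w\<in>S. f (f x y) w = f x (f y w))"

definition is_zero :: "'a set \<Rightarrow> ('a \<Rightarrow> 'a \<Rightarrow> 'a) \<Rightarrow> 'a \<Rightarrow> bool" where
  "is_zero S f z \<longleftrightarrow> z \<in> S \<and> (\<forall>x\<in>S. f z x = z \<and> f x z = z)"

definition sg_ideal :: "'a set \<Rightarrow> ('a \<Rightarrow> 'a \<Rightarrow> 'a) \<Rightarrow> 'a set \<Rightarrow> bool" where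
  "sg_ideal S f I \<longleftrightarrow> I \<subseteq> S \<and> I \<noteq> {} \<and> (\<forall>s\<in>S. \<forall>i\<in>I. f s i \<in> I \<and> f i s \<in> I)"

definition primitive_idempotent :: "'a set \<Rightarrow> ('a \<Rightarrow> 'a \<Rightarrow> 'a) \<Rightarrow> 'a \<Rightarrow> 'a \<Rightarrow> bool" where
  "primitive_idempotent S f z e \<longleftrightarrow> e \<in> S \<and> e \<noteq> z \<and> f e e = e \<and>
     (\<forall>g\<in>S. g \<noteq> z \<and> f g g = g \<and> f e g = g \<and> f g e = g \<longrightarrow> g = e)"

definition completely_zero_simple :: "'a set \<Rightarrow> ('a \<Rightarrow> 'a \<Rightarrow> 'a) \<Rightarrow> 'a \<Rightarrow> bool" where
  "completely_zero_simple S f z \<longleftrightarrow>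
     semigroup_on S f \<and> is_zero S f z \<and>
     {f x y | x y. x \<in> S \<and> y \<in> S} \<noteq> {z} \<and>
     (\<forall>I. sg_ideal S f I \<longrightarrow> I = {z} \<or> I = S) \<and>
     (\<exists>e. primitive_idempotent S f z e)"

definition sg_subgroup :: "'a set \<Rightarrow> ('a \<Rightarrow> 'a \<Rightarrow> 'a) \<Rightarrow> 'a set \<Rightarrow> bool" where
  "sg_subgroup S f H \<longleftrightarrow> H \<subseteq> S \<and> (\<forall>x\<in>H. \<forall>y\<in>H. f x y \<in> H) \<and>
     (\<exists>e\<in>H. (\<forall>h\<in>H. f e h = h \<and> f h e = h) \<and> (\<forall>h\<in>H. \<exists>h'\<in>H. f h h' = e \<and> f h' h = e))"

definition max_subgroup :: "'a set \<Rightarrow> ('a \<Rightarrow> 'a \<Rightarrow> 'a) \<Rightarrow> 'a set \<Rightarrow> bool" where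
  "max_subgroup S f H \<longleftrightarrow> sg_subgroup S f H \<and> (\<forall>K. sg_subgroup S f K \<and> H \<subseteq> K \<longrightarrow> K = H)"

definition nonzero_max_subgroup :: "'a set \<Rightarrow> ('a \<Rightarrow> 'a \<Rightarrow> 'a) \<Rightarrow> 'a \<Rightarrow> 'a set \<Rightarrow> bool" where
  "nonzero_max_subgroup S f z H \<longleftrightarrow> max_subgroup S f H \<and> H \<noteq> {z}"

fun word_val :: "('a \<Rightarrow> 'a \<Rightarrow> 'a) \<Rightarrow> (nat \<Rightarrow> 'a) \<Rightarrow> nat list \<Rightarrow> 'a" where
  "word_val f \<sigma> [] = undefined"
| "word_val f \<sigma> (x # xs) = foldl (\<lambda>a y. f a (\<sigma> y)) (\<sigma> x) xs"

definition finite_generators :: "'a set \<Rightarrow> ('a \<Rightarrow> 'a \<Rightarrow> 'a) \<Rightarrow> nat set \<Rightarrow> (nat \<Rightarrow> 'a) \<Rightarrow> bool" where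
  "finite_generators S f X \<sigma> \<longleftrightarrow> finite X \<and> (\<forall>x\<in>X. \<sigma> x \<in> S) \<and>
     (\<forall>s\<in>S. \<exists>w. w \<noteq> [] \<and> set w \<subseteq> X \<and> word_val f \<sigma> w = s)"

definition fin_generated :: "'a set \<Rightarrow> ('a \<Rightarrow> 'a \<Rightarrow> 'a) \<Rightarrow> bool" where
  "fin_generated S f \<longleftrightarrow> (\<exists>X \<sigma>. finite_generators S f X \<sigma>)"

text \<open>S^1 is modelled as 'a option: None is the adjoined identity 1, Some s is s \<in> S.
  Letters of X-hat: Inl x is x, Inr x is the formal inverse x-bar.\<close>
fun act1 :: "('a \<Rightarrow> 'a \<Rightarrow> 'a) \<Rightarrow> 'a option \<Rightarrow> 'a \<Rightarrow> 'a option" where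
  "act1 f None s = Some s"
| "act1 f (Some a) s = Some (f a s)"

definition vertices1 :: "'a set \<Rightarrow> 'a option set" where
  "vertices1 S = insert None (Some ` S)"

inductive loop_path :: "'a set \<Rightarrow> ('a \<Rightarrow> 'a \<Rightarrow> 'a) \<Rightarrow> nat set \<Rightarrow> (nat \<Rightarrow> 'a)
    \<Rightarrow> 'a option \<Rightarrow> (nat + nat) list \<Rightarrow> 'a option \<Rightarrow> bool"
  for S f X \<sigma> where
  lp_nil: "p \<in> vertices1 S \<Longrightarrow> loop_path S f X \<sigma> p [] p"
| lp_fwd: "x \<in> X \<Longrightarrow> p \<in> vertices1 S \<Longrightarrow> loop_path S f X \<sigma> (act1 f p (\<sigma> x)) w q
            \<Longrightarrow> loop_path S f X \<sigma> p (Inl x # w) q"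
| lp_bwd: "x \<in> X \<Longrightarrow> p' \<in> vertices1 S \<Longrightarrow> act1 f p' (\<sigma> x) = p \<Longrightarrow> loop_path S f X \<sigma> p' w q
            \<Longrightarrow> loop_path S f X \<sigma> p (Inr x # w) q"

definition loop_problem :: "'a set \<Rightarrow> ('a \<Rightarrow> 'a \<Rightarrow> 'a) \<Rightarrow> nat set \<Rightarrow> (nat \<Rightarrow> 'a) \<Rightarrow> (nat + nat) list set" where
  "loop_problem S f X \<sigma> = {w. loop_path S f X \<sigma> None w None}"

fun enc_letter :: "nat + nat \<Rightarrow> nat" where
  "enc_letter (Inl x) = 2 * x"
| "enc_letter (Inr x) = 2 * x + 1"

definition has_loop_problem_in :: "nat list set set \<Rightarrow> 'a set \<Rightarrow> ('a \<Rightarrow> 'a \<Rightarrow> 'a) \<Rightarrow> bool" where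
  "has_loop_problem_in F S f \<longleftrightarrow> fin_generated S f \<and>
     (\<forall>X \<sigma>. finite_generators S f X \<sigma> \<longrightarrow> map enc_letter ` loop_problem S f X \<sigma> \<in> F)"

definition language_family :: "nat list set set \<Rightarrow> bool" where
  "language_family F \<longleftrightarrow> (\<forall>L\<in>F. \<exists>\<Sigma>. finite \<Sigma> \<and> L \<subseteq> lists \<Sigma>)"

definition closed_union :: "nat list set set \<Rightarrow> bool" where
  "closed_union F \<longleftrightarrow> (\<forall>L1\<in>F. \<forall>L2\<in>F. L1 \<union> L2 \<in> F)"

definition lang_product :: "'c list set \<Rightarrow> 'c list set \<Rightarrow> 'c list set" where
  "lang_product L1 L2 = {u @ v | u v. u \<in> L1 \<and> v \<in> L2}"

definition closed_product :: "nat list set set \<Rightarrow> bool" where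
  "closed_product F \<longleftrightarrow> (\<forall>L1\<in>F. \<forall>L2\<in>F. lang_product L1 L2 \<in> F)"

definition kleene_star :: "'c list set \<Rightarrow> 'c list set" where
  "kleene_star L = {concat ws | ws. set ws \<subseteq> L}"

definition closed_star :: "nat list set set \<Rightarrow> bool" where
  "closed_star F \<longleftrightarrow> (\<forall>L\<in>F. kleene_star L \<in> F)"

text \<open>Finite transducers with word-labelled transitions (p, input, output, p').\<close>
inductive trans_path :: "(nat \<times> nat list \<times> nat list \<times> nat) set \<Rightarrow> nat \<Rightarrow> nat list \<Rightarrow> nat list \<Rightarrow> nat \<Rightarrow> bool"
  for \<Delta> where
  tp_nil: "trans_path \<Delta> p [] [] p"
| tp_step: "(p, a, b, p') \<in> \<Delta> \<Longrightarrow> trans_path \<Delta> p' u v q \<Longrightarrow> trans_path \<Delta> p (a @ u) (b @ v) q"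

definition rational_transduction :: "(nat \<times> nat list \<times> nat list \<times> nat) set \<Rightarrow> nat \<Rightarrow> nat set
    \<Rightarrow> (nat list \<times> nat list) set" where
  "rational_transduction \<Delta> q0 Fin = {(u, v). \<exists>q\<in>Fin. trans_path \<Delta> q0 u v q}"

definition closed_rat_trans :: "nat list set set \<Rightarrow> bool" where
  "closed_rat_trans F \<longleftrightarrow> (\<forall>\<Delta> q0 Fin. finite \<Delta> \<longrightarrow>
     (\<forall>L\<in>F. {v. \<exists>u\<in>L. (u, v) \<in> rational_transduction \<Delta> q0 Fin} \<in> F))"

end

theory Submission
  imports Defs
begin

text \<open>
  Every nonzero maximal subgroup of S is the group H of nonzero elements x with e x = x = x e
  for a nonzero idempotent e, and H is finitely generated by Schreier generators: fixing a
  representative in eS of each of the finitely many left ideals S b, every element of eS is moved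
  into H by a right inverse of its representative.

  A loop in the loop automaton of S is a product of excursions: a generator leaves 1, a path
  stays inside S, and an inverse generator returns to 1.  Excursions that pass through zero form
  a regular language: replacing an element by its left ideal gives a finite automaton that can be
  followed forwards up to zero and backwards from the end.  An excursion avoiding zero stays in the
  right ideal of its first vertex, whose nonzero elements map into H injectively on each left
  ideal, each step becoming multiplication by a Schreier generator; so these excursions are the
  image of the loop problem of H under a rational transduction.  Conversely, after extending generators of H to
  generators of S, the loop problem of H consists of the loops of S that only use the letters of H.
  Closure under union, star and rational transduction gives both implications for every nonzero
  maximal subgroup.
\<close>

section \<open>Paths in labelled transition systems\<close>

inductive run :: "('s \<Rightarrow> 'l \<Rightarrow> 's \<Rightarrow> bool) \<Rightarrow> 's \<Rightarrow> 'l list \<Rightarrow> 's \<Rightarrow> bool" for R where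
  run_nil: "run R s [] s"
| run_cons: "R s l s' \<Longrightarrow> run R s' w t \<Longrightarrow> run R s (l # w) t"

lemma run_Nil_iff [simp]: "run R s [] t \<longleftrightarrow> s = t"
  by (auto elim: run.cases intro: run.intros)

lemma run_Cons_iff [simp]: "run R s (l # w) t \<longleftrightarrow> (\<exists>s'. R s l s' \<and> run R s' w t)"
  by (auto elim: run.cases intro: run.intros)

lemma run_append_iff: "run R s (u @ v) t \<longleftrightarrow> (\<exists>m. run R s u m \<and> run R m v t)"
  by (induction u arbitrary: s) auto

lemma run_mono: "run R s w t \<Longrightarrow> (\<And>a l b. R a l b \<Longrightarrow> R' a l b) \<Longrightarrow> run R' s w t"
  by (induction rule: run.induct) auto

lemma run_labels: "run R s w t \<Longrightarrow> (\<And>a l b. R a l b \<Longrightarrow> l \<in> A) \<Longrightarrow> set w \<subseteq> A"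
  by (induction rule: run.induct) auto

lemma run_restrict: "run R s w t \<Longrightarrow> set w \<subseteq> A \<Longrightarrow> run (\<lambda>a l b. R a l b \<and> l \<in> A) s w t"
  by (induction rule: run.induct) auto

lemma run_simulation:
  assumes "run R b w c" and "P b s"
    and step: "\<And>b l b' s. R b l b' \<Longrightarrow> P b s \<Longrightarrow> \<exists>s'. R' s l s' \<and> P b' s'"
  shows "\<exists>s'. run R' s w s' \<and> P c s'"
  using assms(1,2)
proof (induction arbitrary: s rule: run.induct)
  case (run_cons b l b' w c)
  obtain s' where "R' s l s'" "P b' s'" using step[OF run_cons(1,4)] by blast
  with run_cons.IH show ?case by (meson run.run_cons)
qed auto

section \<open>Transducers and closure properties of language families\<close>

text \<open>Finitely many states of an arbitrary type are renamed injectively into nat, the state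
  type of the transducers in the definition of closure under rational transduction.\<close>

lemma run_transduction_in_family:
  fixes R :: "'q \<Rightarrow> 'l \<Rightarrow> 'q \<Rightarrow> bool" and inp out :: "'l \<Rightarrow> nat list"
  assumes fin: "finite {(p, l, p'). R p l p'}" and "L \<in> F" and "closed_rat_trans F"
  shows "{concat (map out ls) | ls. run R q0 ls qf \<and> concat (map inp ls) \<in> L} \<in> F"
proof -
  let ?T = "{(p, l, p'). R p l p'}"
  define A where "A = insert q0 (insert qf (fst ` ?T \<union> (\<lambda>(p, l, p'). p') ` ?T))"
  have "finite A" using fin unfolding A_def by auto
  then obtain \<phi> :: "'q \<Rightarrow> nat" where inj: "inj_on \<phi> A" by (metis finite_imp_inj_to_nat_seg)
  define \<Delta> where "\<Delta> = (\<lambda>(p, l, p'). (\<phi> p, inp l, out l, \<phi> p')) ` ?T"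
  have fwd: "trans_path \<Delta> (\<phi> p) (concat (map inp ls)) (concat (map out ls)) (\<phi> q)"
    if "run R p ls q" for p ls q
    using that
  proof (induction rule: run.induct)
    case (run_cons s l s' w t)
    then have "(\<phi> s, inp l, out l, \<phi> s') \<in> \<Delta>" unfolding \<Delta>_def by force
    from tp_step[OF this run_cons(3)] show ?case by simp
  qed (simp add: tp_nil)
  have bwd: "\<exists>q ls. n = \<phi> q \<and> q \<in> A \<and> run R p ls q \<and> u = concat (map inp ls) \<and> v = concat (map out ls)"
    if "trans_path \<Delta> m u v n" "m = \<phi> p" "p \<in> A" for m p u v n
    using that
  proof (induction arbitrary: p rule: trans_path.induct)
    case (tp_nil m)
    then show ?case by (intro exI[of _ p] exI[of _ "[]"]) simp
  next
    case (tp_step m0 a b m1 u v n)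
    then obtain p1 l p2 where P: "R p1 l p2" "m0 = \<phi> p1" "m1 = \<phi> p2" "a = inp l" "b = out l"
      unfolding \<Delta>_def by auto
    then have "p1 \<in> A" "p2 \<in> A" unfolding A_def by force+
    with P tp_step.prems inj have "p1 = p" by (auto dest: inj_onD)
    moreover obtain q ls where "n = \<phi> q" "q \<in> A" "run R p2 ls q"
        "u = concat (map inp ls)" "v = concat (map out ls)"
      using tp_step.IH[OF P(3) \<open>p2 \<in> A\<close>] by blast
    ultimately show ?case using P by (intro exI[of _ q] exI[of _ "l # ls"]) auto
  qed
  have A: "q0 \<in> A" "qf \<in> A" unfolding A_def by auto
  have "{concat (map out ls) | ls. run R q0 ls qf \<and> concat (map inp ls) \<in> L}
      = {v. \<exists>u\<in>L. (u, v) \<in> rational_transduction \<Delta> (\<phi> q0) {\<phi> qf}}" (is "?lhs = ?rhs")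
  proof (intro set_eqI iffI)
    fix v assume "v \<in> ?lhs"
    then show "v \<in> ?rhs" unfolding rational_transduction_def using fwd by blast
  next
    fix v assume "v \<in> ?rhs"
    then obtain u where "u \<in> L" "trans_path \<Delta> (\<phi> q0) u v (\<phi> qf)"
      unfolding rational_transduction_def by blast
    then obtain q ls where "\<phi> qf = \<phi> q" "q \<in> A" "run R q0 ls q" "u = concat (map inp ls)"
        "v = concat (map out ls)"
      using bwd A(1) by blast
    moreover have "q = qf" using calculation(1,2) A(2) inj by (auto dest: inj_onD)
    ultimately show "v \<in> ?lhs" using \<open>u \<in> L\<close> by blast
  qed
  moreover have "finite \<Delta>" using fin unfolding \<Delta>_def by simp
  ultimately show ?thesis using assms(2,3) unfolding closed_rat_trans_def by simp
qed

lemma letter_transduction_in_family: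
  fixes R :: "'q \<Rightarrow> 'c \<times> 'c \<Rightarrow> 'q \<Rightarrow> bool" and h :: "'c \<Rightarrow> nat"
  assumes "finite {(p, l, p'). R p l p'}" and "inj h" and "map h ` L \<in> F" and "closed_rat_trans F"
  shows "map h ` {map snd ls | ls. run R q0 ls qf \<and> map fst ls \<in> L} \<in> F"
proof -
  have eq: "concat (map (\<lambda>l. [h (g l)]) ls) = map h (map g ls)" for g :: "'c \<times> 'c \<Rightarrow> 'c" and ls
    by (induction ls) auto
  have "{concat (map (\<lambda>l. [h (snd l)]) ls) | ls.
      run R q0 ls qf \<and> concat (map (\<lambda>l. [h (fst l)]) ls) \<in> map h ` L} \<in> F"
    by (rule run_transduction_in_family[OF assms(1,3,4)])
  then have "{map h (map snd ls) | ls. run R q0 ls qf \<and> map h (map fst ls) \<in> map h ` L} \<in> F"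
    unfolding eq .
  moreover have "map h (map fst ls) \<in> map h ` L \<longleftrightarrow> map fst ls \<in> L" for ls :: "('c \<times> 'c) list"
    using inj_image_mem_iff[OF inj_mapI[OF assms(2)]] .
  then have "map h ` {map snd ls | ls. run R q0 ls qf \<and> map fst ls \<in> L}
      = {map h (map snd ls) | ls. run R q0 ls qf \<and> map h (map fst ls) \<in> map h ` L}" by blast
  ultimately show ?thesis by simp
qed

lemma automaton_language_in_family:
  fixes R :: "'q \<Rightarrow> 'c \<Rightarrow> 'q \<Rightarrow> bool" and h :: "'c \<Rightarrow> nat"
  assumes "finite {(p, l, p'). R p l p'}" and "L \<in> F" and "[] \<in> L" and "closed_rat_trans F"
  shows "map h ` {w. run R q0 w qf} \<in> F"
proof -
  have eqs: "concat (map (\<lambda>l. [h l]) w) = map h w" "concat (map (\<lambda>_. []) w) = ([] :: nat list)" for w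
    by (induction w) auto
  show ?thesis
    using run_transduction_in_family[OF assms(1,2,4), where inp = "\<lambda>_. []" and out = "\<lambda>l. [h l]"]
    unfolding eqs using assms(3) by (simp add: image_Collect)
qed

lemma restrict_alphabet_in_family:
  fixes h :: "'c \<Rightarrow> nat"
  assumes "inj h" and "finite A" and "map h ` L \<in> F" and "closed_rat_trans F"
  shows "map h ` {w \<in> L. set w \<subseteq> A} \<in> F"
proof -
  define R where "R = (\<lambda>(_ :: unit) (l :: 'c \<times> 'c) (_ :: unit). fst l = snd l \<and> fst l \<in> A)"
  have "{(p, l, p'). R p l p'} \<subseteq> UNIV \<times> (A \<times> A) \<times> UNIV" unfolding R_def by auto
  moreover have "finite ((UNIV :: unit set) \<times> (A \<times> A) \<times> (UNIV :: unit set))" using assms(2) by simp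
  ultimately have "finite {(p, l, p'). R p l p'}" by (rule finite_subset)
  from letter_transduction_in_family[OF this assms(1,3,4), of "()" "()"]
  have "map h ` {map snd ls | ls. run R () ls () \<and> map fst ls \<in> L} \<in> F" .
  moreover have "{map snd ls | ls. run R () ls () \<and> map fst ls \<in> L} = {w \<in> L. set w \<subseteq> A}"
  proof (intro set_eqI iffI)
    have run_R: "run R () ls () \<longleftrightarrow> map snd ls = map fst ls \<and> set (map fst ls) \<subseteq> A" for ls
      unfolding R_def by (induction ls) auto
    fix w
    show "w \<in> {w \<in> L. set w \<subseteq> A}" if "w \<in> {map snd ls | ls. run R () ls () \<and> map fst ls \<in> L}"
    proof -
      from that obtain ls where ls: "w = map snd ls" "run R () ls ()" "map fst ls \<in> L" by blast
      then have "w = map fst ls" "set w \<subseteq> A" using run_R by metis+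
      then show ?thesis using ls(3) by simp
    qed
    show "w \<in> {map snd ls | ls. run R () ls () \<and> map fst ls \<in> L}" if "w \<in> {w \<in> L. set w \<subseteq> A}"
      using that run_R[of "zip w w"] by (intro CollectI exI[of _ "zip w w"]) auto
  qed
  ultimately show ?thesis by simp
qed

lemma image_kleene_star: "map h ` kleene_star E = kleene_star (map h ` E)"
proof
  show "map h ` kleene_star E \<subseteq> kleene_star (map h ` E)"
    unfolding kleene_star_def by (force simp: map_concat)
next
  show "kleene_star (map h ` E) \<subseteq> map h ` kleene_star E"
  proof
    fix v assume "v \<in> kleene_star (map h ` E)"
    then obtain ws where ws: "set ws \<subseteq> map h ` E" "v = concat ws" unfolding kleene_star_def by auto
    have "ws \<in> map (map h) ` lists E" using ws(1) by (auto simp flip: lists_image)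
    then obtain us where "set us \<subseteq> E" "ws = map (map h) us" by auto
    then show "v \<in> map h ` kleene_star E" unfolding kleene_star_def using ws
      by (intro image_eqI[of _ _ "concat us"]) (auto simp: map_concat)
  qed
qed

lemma Nil_in_kleene_star: "[] \<in> kleene_star E"
  unfolding kleene_star_def by (intro CollectI exI[of _ "[]"]) simp

lemma append_in_kleene_star:
  assumes "u \<in> E" "v \<in> kleene_star E" shows "u @ v \<in> kleene_star E"
proof -
  obtain ws where "set ws \<subseteq> E" "v = concat ws" using assms(2) unfolding kleene_star_def by blast
  then show ?thesis using assms(1) unfolding kleene_star_def by (intro CollectI exI[of _ "u # ws"]) auto
qed

lemma inj_enc_letter: "inj enc_letter"
proof (rule injI)
  fix a b :: "nat + nat" show "enc_letter a = enc_letter b \<Longrightarrow> a = b"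
    by (cases a; cases b) (simp_all, presburger+)
qed

section \<open>Completely 0-simple semigroups\<close>

locale czs_semigroup =
  fixes S :: "'a set" and f :: "'a \<Rightarrow> 'a \<Rightarrow> 'a" (infixl "\<cdot>" 70) and z :: 'a
  assumes czs: "completely_zero_simple S f z"
begin

lemma closed [simp, intro]: "a \<in> S \<Longrightarrow> b \<in> S \<Longrightarrow> a \<cdot> b \<in> S"
  and assoc: "a \<in> S \<Longrightarrow> b \<in> S \<Longrightarrow> c \<in> S \<Longrightarrow> a \<cdot> b \<cdot> c = a \<cdot> (b \<cdot> c)"
  using czs unfolding completely_zero_simple_def semigroup_on_def by simp_all

lemma zero_in [simp, intro]: "z \<in> S"
  and zero_left [simp]: "a \<in> S \<Longrightarrow> z \<cdot> a = z"
  and zero_right [simp]: "a \<in> S \<Longrightarrow> a \<cdot> z = z"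
  using czs unfolding completely_zero_simple_def is_zero_def by simp_all

lemma ideal_eq_carrier: "sg_ideal S f I \<Longrightarrow> I \<noteq> {z} \<Longrightarrow> I = S"
  and products_ne_zero: "{a \<cdot> b | a b. a \<in> S \<and> b \<in> S} \<noteq> {z}"
  and primitive_idempotent_exists: "\<exists>e. primitive_idempotent S f z e"
  using czs unfolding completely_zero_simple_def by auto

lemma factorization: assumes "s \<in> S" shows "\<exists>a\<in>S. \<exists>b\<in>S. s = a \<cdot> b"
proof -
  let ?SS = "{a \<cdot> b | a b. a \<in> S \<and> b \<in> S}"
  have "sg_ideal S f ?SS" unfolding sg_ideal_def
  proof (intro conjI ballI)
    fix t i assume "t \<in> S" "i \<in> ?SS"
    then obtain a b where "a \<in> S" "b \<in> S" "i = a \<cdot> b" by blast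
    with \<open>t \<in> S\<close> have "t \<cdot> i = (t \<cdot> a) \<cdot> b" "i \<cdot> t = a \<cdot> (b \<cdot> t)" by (simp_all add: assoc)
    with \<open>t \<in> S\<close> \<open>a \<in> S\<close> \<open>b \<in> S\<close> show "t \<cdot> i \<in> ?SS" "i \<cdot> t \<in> ?SS" by blast+
  qed auto
  then have "?SS = S" using ideal_eq_carrier products_ne_zero by blast
  then show ?thesis using assms by blast
qed

lemma factor_through_nonzero:
  assumes a: "a \<in> S" "a \<noteq> z" and s: "s \<in> S"
  shows "\<exists>u\<in>S. \<exists>v\<in>S. s = u \<cdot> a \<cdot> v"
proof -
  let ?SaS = "{u \<cdot> a \<cdot> v | u v. u \<in> S \<and> v \<in> S}"
  have "?SaS \<noteq> {z}"
  proof
    assume SaS: "?SaS = {z}"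
    \<comment> \<open>then a lies in the ideal of elements annihilated from both sides, which is all of S,
      so S = S S S = {z}\<close>
    let ?T = "{t \<in> S. \<forall>u\<in>S. \<forall>v\<in>S. u \<cdot> t \<cdot> v = z}"
    have "sg_ideal S f ?T" unfolding sg_ideal_def
    proof (intro conjI ballI)
      fix s t assume "s \<in> S" "t \<in> ?T"
      then show "s \<cdot> t \<in> ?T" "t \<cdot> s \<in> ?T"
        by (auto simp: assoc)
    qed auto
    moreover have "a \<in> ?T" using SaS a(1) by (auto simp: set_eq_iff)
    ultimately have T: "?T = S" using ideal_eq_carrier a(2) by blast
    have zero: "t = z" if t: "t \<in> S" for t
    proof -
      obtain p q where "p \<in> S" "q \<in> S" "t = p \<cdot> q" using factorization[OF t] by blast
      moreover obtain r w where "r \<in> S" "w \<in> S" "q = r \<cdot> w" using factorization[OF \<open>q \<in> S\<close>] by blast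
      ultimately have "t = p \<cdot> r \<cdot> w" by (simp add: assoc)
      moreover have "r \<in> ?T" using T \<open>r \<in> S\<close> by (simp only:)
      ultimately show ?thesis using \<open>p \<in> S\<close> \<open>w \<in> S\<close> by simp
    qed
    have "{a \<cdot> b | a b. a \<in> S \<and> b \<in> S} \<subseteq> {z}" using zero by auto
    moreover have "z = z \<cdot> z" by simp
    then have "z \<in> {a \<cdot> b | a b. a \<in> S \<and> b \<in> S}" by blast
    ultimately show False using products_ne_zero by blast
  qed
  moreover have "sg_ideal S f ?SaS" unfolding sg_ideal_def
  proof (intro conjI ballI)
    fix t i assume "t \<in> S" "i \<in> ?SaS"
    then obtain u v where "u \<in> S" "v \<in> S" "i = u \<cdot> a \<cdot> v" by blast
    with \<open>t \<in> S\<close> a have "t \<cdot> i = (t \<cdot> u) \<cdot> a \<cdot> v" "i \<cdot> t = u \<cdot> a \<cdot> (v \<cdot> t)" by (simp_all add: assoc)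
    with \<open>t \<in> S\<close> \<open>u \<in> S\<close> \<open>v \<in> S\<close> show "t \<cdot> i \<in> ?SaS" "i \<cdot> t \<in> ?SaS" by blast+
  qed (use a in auto)
  ultimately have "?SaS = S" using ideal_eq_carrier by blast
  then show ?thesis using s by blast
qed

lemma czs_semigroup_opposite: "czs_semigroup S (\<lambda>x y. y \<cdot> x) z"
proof -
  have "semigroup_on S (\<lambda>x y. y \<cdot> x)" unfolding semigroup_on_def by (simp add: assoc)
  moreover have "is_zero S (\<lambda>x y. y \<cdot> x) z" unfolding is_zero_def by simp
  moreover have "{y \<cdot> x | x y. x \<in> S \<and> y \<in> S} = {x \<cdot> y | x y. x \<in> S \<and> y \<in> S}" by blast
  moreover have "sg_ideal S (\<lambda>x y. y \<cdot> x) = sg_ideal S f"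
    unfolding sg_ideal_def by (intro ext) blast
  moreover have "primitive_idempotent S (\<lambda>x y. y \<cdot> x) z = primitive_idempotent S f z"
    unfolding primitive_idempotent_def by (intro ext) blast
  ultimately show ?thesis
    using czs unfolding czs_semigroup_def completely_zero_simple_def by simp
qed

lemma primitive_idempotent_in_right_ideal:
  assumes e: "primitive_idempotent S f z e" and a: "a \<in> S" "a \<noteq> z" "e \<cdot> a = a"
  shows "\<exists>t\<in>S. e = a \<cdot> t"
proof -
  have eS: "e \<in> S" "e \<noteq> z" "e \<cdot> e = e" using e unfolding primitive_idempotent_def by auto
  obtain u v where uv: "u \<in> S" "v \<in> S" "e = u \<cdot> a \<cdot> v" using factor_through_nonzero[OF a(1,2) eS(1)] by blast
  define u' where "u' = e \<cdot> u \<cdot> e"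
  define v' where "v' = v \<cdot> e"
  have S': "u' \<in> S" "v' \<in> S" unfolding u'_def v'_def using uv eS by auto
  have E: "u' \<cdot> (a \<cdot> v') = e"
  proof -
    have "u' \<cdot> (a \<cdot> v') = e \<cdot> (u \<cdot> ((e \<cdot> a) \<cdot> (v \<cdot> e)))"
      unfolding u'_def v'_def using uv eS a(1) by (simp add: assoc)
    also have "\<dots> = e \<cdot> (u \<cdot> a \<cdot> v) \<cdot> e" using uv eS a by (simp add: assoc)
    finally show ?thesis using uv(3) eS by simp
  qed
  have eu': "e \<cdot> u' = u'" "u' \<cdot> e = u'" unfolding u'_def using uv eS by (metis assoc closed)+
  \<comment> \<open>g is a nonzero idempotent below e, hence equal to e by primitivity\<close>
  define g where "g = a \<cdot> (v' \<cdot> u')"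
  have gS: "g \<in> S" unfolding g_def using a S' by auto
  have "g \<cdot> g = a \<cdot> (v' \<cdot> ((u' \<cdot> (a \<cdot> v')) \<cdot> u'))" unfolding g_def using a(1) S' by (simp add: assoc)
  then have gg: "g \<cdot> g = g" unfolding g_def using E eu' by simp
  have eg: "e \<cdot> g = g" and ge: "g \<cdot> e = g" unfolding g_def using a S' eu' eS by (metis assoc closed)+
  have "u' \<cdot> (g \<cdot> (a \<cdot> v')) = (u' \<cdot> (a \<cdot> v')) \<cdot> (u' \<cdot> (a \<cdot> v'))"
    unfolding g_def using a(1) S' by (simp add: assoc)
  then have "g \<noteq> z" using E eS a(1) S' by auto
  then have "g = e" using e gS gg eg ge unfolding primitive_idempotent_def by blast
  then show ?thesis unfolding g_def using a S' by blast
qed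

lemma R_equiv_prod:
  assumes xy: "x \<in> S" "y \<in> S" "x \<cdot> y \<noteq> z" shows "\<exists>t\<in>S. x = x \<cdot> y \<cdot> t"
proof -
  obtain e where e: "primitive_idempotent S f z e" using primitive_idempotent_exists by blast
  then have eS: "e \<in> S" "e \<noteq> z" "e \<cdot> e = e" unfolding primitive_idempotent_def by auto
  obtain s t where st: "s \<in> S" "t \<in> S" "x = s \<cdot> e \<cdot> t" using factor_through_nonzero[OF eS(1,2) xy(1)] by blast
  define a where "a = e \<cdot> (t \<cdot> y)"
  have aS: "a \<in> S" and xya: "x \<cdot> y = s \<cdot> a" unfolding a_def using st xy eS by (simp_all add: assoc)
  have "a \<noteq> z" using xya xy st by auto
  moreover have "e \<cdot> a = a" unfolding a_def using st xy eS by (metis assoc closed)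
  ultimately obtain t' where t': "t' \<in> S" "a \<cdot> t' = e"
    using primitive_idempotent_in_right_ideal[OF e aS] by metis
  have "e \<cdot> (e \<cdot> t) = e \<cdot> t" using eS st by (metis assoc)
  then have "x = s \<cdot> ((a \<cdot> t') \<cdot> (e \<cdot> t))" using st eS t'(2) by (simp add: assoc)
  also have "\<dots> = (s \<cdot> a) \<cdot> (t' \<cdot> (e \<cdot> t))" using st eS t'(1) aS by (simp add: assoc)
  finally have "x = x \<cdot> y \<cdot> (t' \<cdot> (e \<cdot> t))" using xya by simp
  then show ?thesis using t'(1) st eS by blast
qed

lemma L_equiv_prod:
  assumes "x \<in> S" "y \<in> S" "x \<cdot> y \<noteq> z" shows "\<exists>t\<in>S. y = t \<cdot> x \<cdot> y"
  using czs_semigroup.R_equiv_prod[OF czs_semigroup_opposite, of y x] assms by (auto simp: assoc)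

lemma in_left_ideal_self:
  assumes "x \<in> S" "x \<noteq> z" shows "\<exists>t\<in>S. x = t \<cdot> x"
proof -
  obtain a b where ab: "a \<in> S" "b \<in> S" "x = a \<cdot> b" using factorization[OF assms(1)] by blast
  then obtain t where "t \<in> S" "b = t \<cdot> a \<cdot> b" using L_equiv_prod assms(2) by blast
  then have "x = (a \<cdot> t) \<cdot> x" using ab by (metis assoc closed)
  then show ?thesis using ab \<open>t \<in> S\<close> by blast
qed

definition lideal :: "'a \<Rightarrow> 'a set" where
  "lideal b = (\<lambda>s. s \<cdot> b) ` S"

lemma lideal_mult:
  assumes "a \<in> S" "b \<in> S" "a \<cdot> b \<noteq> z" shows "lideal (a \<cdot> b) = lideal b"
proof
  show "lideal (a \<cdot> b) \<subseteq> lideal b"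
    unfolding lideal_def using assms by (auto simp flip: assoc)
  obtain t where t: "t \<in> S" "b = t \<cdot> a \<cdot> b" using L_equiv_prod[OF assms] by blast
  then have "s \<cdot> b = (s \<cdot> t) \<cdot> (a \<cdot> b)" if "s \<in> S" for s using that assms by (metis assoc closed)
  then show "lideal b \<subseteq> lideal (a \<cdot> b)" unfolding lideal_def using t(1) by blast
qed

lemma lideal_self: "b \<in> S \<Longrightarrow> b \<noteq> z \<Longrightarrow> b \<in> lideal b"
  using in_left_ideal_self unfolding lideal_def by blast

definition maxgroup :: "'a \<Rightarrow> 'a set" where
  "maxgroup e = {x \<in> S. x \<noteq> z \<and> e \<cdot> x = x \<and> x \<cdot> e = x}"

lemma subgroup_subset_maxgroup:
  assumes K: "sg_subgroup S f K" and e: "e \<in> K" "\<forall>h\<in>K. e \<cdot> h = h \<and> h \<cdot> e = h"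
    and inv: "\<forall>h\<in>K. \<exists>h'\<in>K. h \<cdot> h' = e" and "e \<noteq> z"
  shows "K \<subseteq> maxgroup e"
proof
  fix k assume k: "k \<in> K"
  have KS: "K \<subseteq> S" using K unfolding sg_subgroup_def by blast
  obtain k' where "k' \<in> K" "k \<cdot> k' = e" using inv k by blast
  then have "k \<noteq> z" using KS \<open>e \<noteq> z\<close> by auto
  then show "k \<in> maxgroup e" unfolding maxgroup_def using KS e k by auto
qed

end

locale czs_idempotent = czs_semigroup +
  fixes e :: 'a
  assumes idem_in [simp, intro]: "e \<in> S" and idem [simp]: "e \<cdot> e = e" and idem_nonzero: "e \<noteq> z"
begin

lemma idem_in_maxgroup: "e \<in> maxgroup e"
  unfolding maxgroup_def using idem_nonzero by simp

lemma maxgroupD: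
  assumes "x \<in> maxgroup e" shows "x \<in> S" "x \<noteq> z" "e \<cdot> x = x" "x \<cdot> e = x"
  using assms unfolding maxgroup_def by auto

lemma maxgroup_inverse:
  assumes x: "x \<in> maxgroup e" shows "\<exists>y\<in>maxgroup e. x \<cdot> y = e \<and> y \<cdot> x = e"
proof -
  note xS = maxgroupD[OF x]
  obtain t where t: "t \<in> S" "e = e \<cdot> x \<cdot> t" using R_equiv_prod[of e x] xS idem_nonzero by auto
  have xt: "x \<cdot> t = e" using t xS by metis
  obtain t' where t': "t' \<in> S" "e = t' \<cdot> x \<cdot> e" using L_equiv_prod[of x e] xS idem_nonzero by auto
  have tx: "t' \<cdot> x = e" using t' xS by (metis assoc idem_in)
  define y where "y = e \<cdot> t \<cdot> e"
  define y' where "y' = e \<cdot> t' \<cdot> e"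
  have yS: "y \<in> S" "y' \<in> S" unfolding y_def y'_def using t t' by auto
  have xy: "x \<cdot> y = e" unfolding y_def using xS xt t(1) by (metis assoc closed idem idem_in)
  have y'x: "y' \<cdot> x = e" unfolding y'_def using xS tx t'(1) by (metis assoc closed idem idem_in)
  have ey: "e \<cdot> y = y" and ye: "y \<cdot> e = y" unfolding y_def using t(1) by (metis assoc closed idem idem_in)+
  have y'e: "y' \<cdot> e = y'" unfolding y'_def using t'(1) by (metis assoc closed idem idem_in)
  have "y' = (y' \<cdot> x) \<cdot> y" using xy y'e yS xS by (simp add: assoc)
  then have yx: "y \<cdot> x = e" using y'x ey by simp
  have "y \<noteq> z" using xy xS idem_nonzero by auto
  then have "y \<in> maxgroup e" unfolding maxgroup_def using yS ey ye by auto
  then show ?thesis using xy yx by blast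
qed

lemma maxgroup_mult:
  assumes x: "x \<in> maxgroup e" and y: "y \<in> maxgroup e" shows "x \<cdot> y \<in> maxgroup e"
proof -
  obtain x' where x': "x' \<in> maxgroup e" "x' \<cdot> x = e" using maxgroup_inverse[OF x] by blast
  note xS = maxgroupD[OF x] and yS = maxgroupD[OF y] and x'S = maxgroupD[OF x'(1)]
  have "x' \<cdot> (x \<cdot> y) = y" using xS yS x'S x'(2) by (metis assoc)
  then have "x \<cdot> y \<noteq> z" using yS x'S by (metis zero_right)
  moreover have "e \<cdot> (x \<cdot> y) = x \<cdot> y" "(x \<cdot> y) \<cdot> e = x \<cdot> y"
    using xS yS by (metis assoc idem_in)+
  ultimately show ?thesis unfolding maxgroup_def using xS yS by simp
qed

lemma maxgroup_cancel_right:
  assumes "a \<in> maxgroup e" "b \<in> maxgroup e" "g \<in> maxgroup e" "a \<cdot> g = b \<cdot> g" shows "a = b"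
proof -
  obtain g' where g': "g' \<in> maxgroup e" "g \<cdot> g' = e" using maxgroup_inverse[OF assms(3)] by blast
  note S = maxgroupD[OF assms(1)] maxgroupD[OF assms(2)] maxgroupD[OF assms(3)] maxgroupD[OF g'(1)]
  have "a = (a \<cdot> g) \<cdot> g'" using S g' by (simp add: assoc)
  also have "\<dots> = b" using S g' assms(4) by (simp add: assoc)
  finally show ?thesis .
qed

lemma sg_subgroup_maxgroup: "sg_subgroup S f (maxgroup e)"
  unfolding sg_subgroup_def
proof (intro conjI bexI[of _ e])
  show "maxgroup e \<subseteq> S" unfolding maxgroup_def by blast
  show "\<forall>x\<in>maxgroup e. \<forall>y\<in>maxgroup e. x \<cdot> y \<in> maxgroup e" using maxgroup_mult by blast
  show "\<forall>h\<in>maxgroup e. e \<cdot> h = h \<and> h \<cdot> e = h" using maxgroupD by blast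
  show "\<forall>h\<in>maxgroup e. \<exists>h'\<in>maxgroup e. h \<cdot> h' = e \<and> h' \<cdot> h = e"
    using maxgroup_inverse by blast
qed (rule idem_in_maxgroup)

lemma nonzero_max_subgroup_maxgroup: "nonzero_max_subgroup S f z (maxgroup e)"
  unfolding nonzero_max_subgroup_def max_subgroup_def
proof (intro conjI allI impI)
  fix K assume K: "sg_subgroup S f K \<and> maxgroup e \<subseteq> K"
  then obtain e' where e': "e' \<in> K" "\<forall>h\<in>K. e' \<cdot> h = h \<and> h \<cdot> e' = h"
      "\<forall>h\<in>K. \<exists>h'\<in>K. h \<cdot> h' = e' \<and> h' \<cdot> h = e'" and KS: "K \<subseteq> S"
    unfolding sg_subgroup_def by blast
  have eK: "e \<in> K" using K idem_in_maxgroup by auto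
  obtain d where d: "d \<in> K" "d \<cdot> e = e'" using e'(3) eK by blast
  have "e' = (d \<cdot> e) \<cdot> e" using d KS by (metis assoc idem idem_in subsetD)
  then have "e' = e" using d e'(2) eK by simp
  then have "K \<subseteq> maxgroup e" using subgroup_subset_maxgroup[of K e] K e' idem_nonzero by blast
  then show "K = maxgroup e" using K by blast
qed (use sg_subgroup_maxgroup idem_in_maxgroup idem_nonzero in auto)

end

context czs_semigroup
begin

lemma nonzero_max_subgroup_eq_maxgroup:
  assumes "nonzero_max_subgroup S f z H"
  shows "\<exists>e. czs_idempotent S f z e \<and> H = maxgroup e"
proof -
  have H: "sg_subgroup S f H" "\<forall>K. sg_subgroup S f K \<and> H \<subseteq> K \<longrightarrow> K = H" "H \<noteq> {z}"
    using assms unfolding nonzero_max_subgroup_def max_subgroup_def by auto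
  then obtain e where eH: "e \<in> H" "\<forall>h\<in>H. e \<cdot> h = h \<and> h \<cdot> e = h"
      "\<forall>h\<in>H. \<exists>h'\<in>H. h \<cdot> h' = e \<and> h' \<cdot> h = e" and HS: "H \<subseteq> S"
    unfolding sg_subgroup_def by blast
  have "e \<noteq> z"
  proof
    assume "e = z"
    have "h = z" if "h \<in> H" for h
    proof -
      have "h \<in> S" "e \<cdot> h = h" using that HS eH(2) by auto
      then show ?thesis using \<open>e = z\<close> by simp
    qed
    then have "H = {z}" using eH(1) by blast
    then show False using H(3) by simp
  qed
  moreover have "e \<in> S" "e \<cdot> e = e" using eH(1,2) HS by auto
  ultimately interpret czs_idempotent S f z e by unfold_locales
  have "\<forall>h\<in>H. \<exists>h'\<in>H. h \<cdot> h' = e" using eH(3) by blast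
  then have "H \<subseteq> maxgroup e" using subgroup_subset_maxgroup[OF H(1) eH(1,2)] idem_nonzero by blast
  then have "H = maxgroup e" using H(2) sg_subgroup_maxgroup by metis
  then show ?thesis using czs_idempotent_axioms by blast
qed

lemma nonzero_max_subgroup_exists: "\<exists>H. nonzero_max_subgroup S f z H"
proof -
  obtain e where "primitive_idempotent S f z e" using primitive_idempotent_exists by blast
  then interpret czs_idempotent S f z e by unfold_locales (auto simp: primitive_idempotent_def)
  show ?thesis using nonzero_max_subgroup_maxgroup by blast
qed

end

section \<open>Representatives of left ideals and generators of the maximal subgroup\<close>

fun lprod :: "('a \<Rightarrow> 'a \<Rightarrow> 'a) \<Rightarrow> 'a list \<Rightarrow> 'a" where
  "lprod f [] = undefined"
| "lprod f (x # xs) = foldl f x xs"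

lemma word_val_eq_lprod: "word_val f \<sigma> w = lprod f (map \<sigma> w)"
proof (cases w)
  case (Cons x xs)
  have "foldl (\<lambda>a y. f a (\<sigma> y)) b l = foldl f b (map \<sigma> l)" for b l
    by (induction l arbitrary: b) auto
  then show ?thesis using Cons by simp
qed simp

lemma lprod_snoc: "l \<noteq> [] \<Longrightarrow> lprod f (l @ [b]) = f (lprod f l) b"
  by (cases l) auto

lemma word_val_snoc: "w \<noteq> [] \<Longrightarrow> word_val f \<sigma> (w @ [x]) = f (word_val f \<sigma> w) (\<sigma> x)"
  by (simp add: word_val_eq_lprod lprod_snoc)

lemma finite_generators_image:
  assumes "finite Y" and "\<tau> ` Y \<subseteq> G"
    and "\<And>h. h \<in> G \<Longrightarrow> \<exists>l. l \<noteq> [] \<and> set l \<subseteq> \<tau> ` Y \<and> lprod f l = h"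
  shows "finite_generators G f Y \<tau>"
  unfolding finite_generators_def
proof (intro conjI ballI)
  fix h assume "h \<in> G"
  then obtain l where l: "l \<noteq> []" "set l \<subseteq> \<tau> ` Y" "lprod f l = h" using assms(3) by blast
  define w where "w = map (inv_into Y \<tau>) l"
  have "map \<tau> w = l" unfolding w_def using l(2) by (induction l) (auto simp: f_inv_into_f)
  moreover have "set w \<subseteq> Y" unfolding w_def using l(2) by (auto intro: inv_into_into)
  ultimately show "\<exists>w. w \<noteq> [] \<and> set w \<subseteq> Y \<and> word_val f \<tau> w = h"
    using l by (intro exI[of _ w]) (auto simp: word_val_eq_lprod w_def)
qed (use assms in auto)

locale czs_generated = czs_idempotent +
  fixes X :: "nat set" and \<sigma> :: "nat \<Rightarrow> 'a"
  assumes gen: "finite_generators S f X \<sigma>"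
begin

lemma finite_X: "finite X"
  and gen_in [simp]: "x \<in> X \<Longrightarrow> \<sigma> x \<in> S"
  and gen_surj: "s \<in> S \<Longrightarrow> \<exists>w. w \<noteq> [] \<and> set w \<subseteq> X \<and> word_val f \<sigma> w = s"
  using gen unfolding finite_generators_def by blast+

lemma word_val_in: "set w \<subseteq> X \<Longrightarrow> w \<noteq> [] \<Longrightarrow> word_val f \<sigma> w \<in> S"
proof (induction w rule: rev_induct)
  case (snoc x w)
  then show ?case by (cases "w = []") (auto simp: word_val_snoc)
qed simp

definition lclasses :: "'a set set" where
  "lclasses = (\<lambda>x. lideal (\<sigma> x)) ` {x \<in> X. \<sigma> x \<noteq> z}"

lemma finite_lclasses: "finite lclasses"
  unfolding lclasses_def using finite_X by simp

lemma lideal_in_lclasses: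
  assumes "b \<in> S" "b \<noteq> z" shows "lideal b \<in> lclasses"
proof -
  obtain w where w: "w \<noteq> []" "set w \<subseteq> X" "word_val f \<sigma> w = b" using gen_surj[OF assms(1)] by blast
  then obtain w' x where wx: "w = w' @ [x]" by (metis rev_exhaust)
  have "\<exists>x\<in>X. \<sigma> x \<noteq> z \<and> lideal b = lideal (\<sigma> x)"
  proof (cases "w' = []")
    case False
    then have b: "b = word_val f \<sigma> w' \<cdot> \<sigma> x" using w wx by (simp add: word_val_snoc)
    have wS: "word_val f \<sigma> w' \<in> S" and x: "x \<in> X" using word_val_in[of w'] w wx False by auto
    then have "\<sigma> x \<noteq> z" using b assms by (metis zero_right)
    moreover have "lideal b = lideal (\<sigma> x)" using b wS x assms lideal_mult by simp
    ultimately show ?thesis using x by blast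
  qed (use w wx assms in auto)
  then show ?thesis unfolding lclasses_def by blast
qed

definition rep :: "'a set \<Rightarrow> 'a" where
  "rep L = (SOME q. q \<in> S \<and> q \<noteq> z \<and> e \<cdot> q = q \<and> lideal q = L)"

definition rep_inv :: "'a set \<Rightarrow> 'a" where
  "rep_inv L = (SOME q'. q' \<in> S \<and> q' \<cdot> e = q' \<and> rep L \<cdot> q' = e)"

lemma rep:
  assumes "L \<in> lclasses" shows "rep L \<in> S" "rep L \<noteq> z" "e \<cdot> rep L = rep L" "lideal (rep L) = L"
proof -
  obtain x where x: "x \<in> X" "\<sigma> x \<noteq> z" "L = lideal (\<sigma> x)" using assms unfolding lclasses_def by auto
  obtain u v where uv: "u \<in> S" "v \<in> S" "e = u \<cdot> \<sigma> x \<cdot> v" using factor_through_nonzero[of "\<sigma> x" e] x by auto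
  define q where "q = (e \<cdot> u) \<cdot> \<sigma> x"
  have qS: "q \<in> S" unfolding q_def using uv x by auto
  have eq: "e \<cdot> q = q" unfolding q_def using uv x by (metis assoc closed gen_in idem idem_in)
  have "e = q \<cdot> v" unfolding q_def using uv x by (metis assoc closed gen_in idem idem_in)
  then have qz: "q \<noteq> z" using idem_nonzero uv by auto
  have "lideal q = L" unfolding q_def using lideal_mult[of "e \<cdot> u" "\<sigma> x"] qz uv x q_def by auto
  then have "\<exists>q. q \<in> S \<and> q \<noteq> z \<and> e \<cdot> q = q \<and> lideal q = L" using qS qz eq by blast
  from someI_ex[OF this] show "rep L \<in> S" "rep L \<noteq> z" "e \<cdot> rep L = rep L" "lideal (rep L) = L"
    unfolding rep_def by auto
qed

lemma rep_inv:
  assumes "L \<in> lclasses" shows "rep_inv L \<in> S" "rep_inv L \<cdot> e = rep_inv L" "rep L \<cdot> rep_inv L = e"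
proof -
  note q = rep[OF assms]
  obtain t where t: "t \<in> S" "e = e \<cdot> rep L \<cdot> t" using R_equiv_prod[of e "rep L"] q idem_nonzero by auto
  then have "rep L \<cdot> (t \<cdot> e) = e" using q by (metis assoc idem idem_in)
  moreover have "t \<cdot> e \<cdot> e = t \<cdot> e" using t by (simp add: assoc)
  ultimately have "\<exists>q'. q' \<in> S \<and> q' \<cdot> e = q' \<and> rep L \<cdot> q' = e" using t by blast
  from someI_ex[OF this] show "rep_inv L \<in> S" "rep_inv L \<cdot> e = rep_inv L" "rep L \<cdot> rep_inv L = e"
    unfolding rep_inv_def by auto
qed

lemma rep_inv_rep_right_id:
  assumes "L \<in> lclasses" "d \<in> L" shows "d \<cdot> rep_inv L \<cdot> rep L = d"
proof -
  obtain s where s: "s \<in> S" "d = s \<cdot> rep L" using assms(2) rep(4)[OF assms(1)] unfolding lideal_def by auto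
  then show ?thesis using rep[OF assms(1)] rep_inv[OF assms(1)] by (simp add: assoc)
qed

lemma prod_zero_iff_rep:
  assumes "b \<in> S" "b \<noteq> z" "c \<in> S" shows "b \<cdot> c = z \<longleftrightarrow> rep (lideal b) \<cdot> c = z"
proof -
  have L: "lideal b \<in> lclasses" using lideal_in_lclasses assms by auto
  have "b \<in> lideal (rep (lideal b))" using rep(4)[OF L] lideal_self assms by auto
  then obtain s where s: "s \<in> S" "b = s \<cdot> rep (lideal b)" unfolding lideal_def by auto
  have "rep (lideal b) \<in> lideal b" using rep[OF L] lideal_self by metis
  then obtain s' where s': "s' \<in> S" "rep (lideal b) = s' \<cdot> b" unfolding lideal_def by auto
  show ?thesis using s s' assms rep(1)[OF L] by (metis assoc zero_right)
qed

lemma lideal_predecessor: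
  assumes b: "b \<in> S" "b \<noteq> z" and c: "c \<in> S" "lideal b = lideal c"
    and L: "L \<in> lclasses" "rep L \<cdot> c \<noteq> z"
  shows "\<exists>d\<in>S. d \<noteq> z \<and> lideal d = L \<and> d \<cdot> c = b"
proof -
  note q = rep[OF L(1)]
  have "lideal (rep L \<cdot> c) = lideal c" using lideal_mult q c L by auto
  then have "b \<in> lideal (rep L \<cdot> c)" using c lideal_self b by auto
  then obtain r where r: "r \<in> S" "b = r \<cdot> (rep L \<cdot> c)" unfolding lideal_def by auto
  define d where "d = r \<cdot> rep L"
  have dS: "d \<in> S" and dc: "d \<cdot> c = b" unfolding d_def using r q c by (simp_all add: assoc)
  then have dz: "d \<noteq> z" using b c by auto
  have "lideal d = L" unfolding d_def using lideal_mult[of r "rep L"] dz r q d_def by auto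
  then show ?thesis using dS dz dc by auto
qed

definition to_group :: "'a \<Rightarrow> 'a" where
  "to_group p = p \<cdot> rep_inv (lideal p)"

lemma to_group_closed: "p \<in> S \<Longrightarrow> p \<noteq> z \<Longrightarrow> to_group p \<in> S"
  unfolding to_group_def using rep_inv(1) lideal_in_lclasses by simp

lemma to_group_rep:
  assumes "p \<in> S" "p \<noteq> z" shows "to_group p \<cdot> rep (lideal p) = p"
  unfolding to_group_def using rep_inv_rep_right_id lideal_in_lclasses lideal_self assms by simp

lemma to_group_in:
  assumes p: "p \<in> S" "p \<noteq> z" "e \<cdot> p = p" shows "to_group p \<in> maxgroup e"
proof -
  have L: "lideal p \<in> lclasses" using lideal_in_lclasses p by simp
  note q' = rep_inv[OF L]
  have "to_group p \<noteq> z"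
  proof
    assume "to_group p = z"
    then have "p = z" using to_group_rep[OF p(1,2)] rep(1)[OF L] by simp
    then show False using p(2) by simp
  qed
  moreover have "e \<cdot> to_group p = to_group p" "to_group p \<cdot> e = to_group p"
    unfolding to_group_def using p q' by (metis assoc idem_in)+
  ultimately show ?thesis unfolding maxgroup_def to_group_def using p q' by auto
qed

lemma to_group_mult:
  assumes p: "p \<in> S" "p \<noteq> z" and c: "c \<in> S" "p \<cdot> c \<noteq> z"
  shows "to_group (p \<cdot> c) = to_group p \<cdot> to_group (rep (lideal p) \<cdot> c)"
proof -
  have "c \<noteq> z" using p c by (metis zero_right)
  then have L: "lideal p \<in> lclasses" and Lc: "lideal c \<in> lclasses"
    using lideal_in_lclasses p c by simp_all
  have "rep (lideal p) \<cdot> c \<noteq> z" using prod_zero_iff_rep[OF p c(1)] c(2) by simp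
  then have l1: "lideal (rep (lideal p) \<cdot> c) = lideal c" using lideal_mult rep(1)[OF L] c(1) by simp
  have l2: "lideal (p \<cdot> c) = lideal c" using lideal_mult p c by simp
  have "to_group (p \<cdot> c) = (to_group p \<cdot> rep (lideal p)) \<cdot> c \<cdot> rep_inv (lideal c)"
    unfolding to_group_def[of "p \<cdot> c"] l2 using to_group_rep[OF p] by simp
  also have "\<dots> = to_group p \<cdot> (rep (lideal p) \<cdot> c \<cdot> rep_inv (lideal c))"
    using to_group_closed[OF p] c rep(1)[OF L] rep_inv(1)[OF Lc] by (simp add: assoc)
  also have "\<dots> = to_group p \<cdot> to_group (rep (lideal p) \<cdot> c)"
    unfolding to_group_def[of "rep (lideal p) \<cdot> c"] l1 by (rule refl)
  finally show ?thesis .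
qed

definition schreier_gens :: "'a set" where
  "schreier_gens = insert (to_group e)
     (to_group ` {rep L \<cdot> \<sigma> x | L x. L \<in> lclasses \<and> x \<in> X \<and> rep L \<cdot> \<sigma> x \<noteq> z}
      \<union> {rep L \<cdot> e | L. L \<in> lclasses \<and> rep L \<cdot> e \<noteq> z})"

lemma finite_schreier_gens: "finite schreier_gens"
proof -
  have "{rep L \<cdot> \<sigma> x | L x. L \<in> lclasses \<and> x \<in> X \<and> rep L \<cdot> \<sigma> x \<noteq> z}
      \<subseteq> (\<lambda>(L, x). rep L \<cdot> \<sigma> x) ` (lclasses \<times> X)" by auto
  moreover have "finite ((\<lambda>(L, x). rep L \<cdot> \<sigma> x) ` (lclasses \<times> X))"
    using finite_lclasses finite_X by simp
  ultimately have "finite {rep L \<cdot> \<sigma> x | L x. L \<in> lclasses \<and> x \<in> X \<and> rep L \<cdot> \<sigma> x \<noteq> z}"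
    by (rule finite_subset)
  moreover have "finite {rep L \<cdot> e | L. L \<in> lclasses \<and> rep L \<cdot> e \<noteq> z}"
    using finite_lclasses by simp
  ultimately show ?thesis unfolding schreier_gens_def by simp
qed

lemma schreier_gens_subset: "schreier_gens \<subseteq> maxgroup e"
proof -
  have "rep L \<cdot> e \<in> maxgroup e" if "L \<in> lclasses" "rep L \<cdot> e \<noteq> z" for L
  proof -
    have "e \<cdot> (rep L \<cdot> e) = rep L \<cdot> e" using rep[OF that(1)] by (simp flip: assoc)
    moreover have "rep L \<cdot> e \<cdot> e = rep L \<cdot> e" using rep[OF that(1)] by (simp add: assoc)
    ultimately show ?thesis unfolding maxgroup_def using that rep[OF that(1)] by simp
  qed
  moreover have "to_group (rep L \<cdot> \<sigma> x) \<in> maxgroup e" if "L \<in> lclasses" "x \<in> X" "rep L \<cdot> \<sigma> x \<noteq> z" for L x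
    using to_group_in that rep[OF that(1)] by (simp flip: assoc)
  ultimately show ?thesis
    unfolding schreier_gens_def using to_group_in[of e] idem_nonzero by auto
qed

lemma step_in_schreier_gens:
  "L \<in> lclasses \<Longrightarrow> x \<in> X \<Longrightarrow> rep L \<cdot> \<sigma> x \<noteq> z \<Longrightarrow> to_group (rep L \<cdot> \<sigma> x) \<in> schreier_gens"
  unfolding schreier_gens_def by blast

lemma to_group_prefix_in_span:
  assumes "set w \<subseteq> X" "foldl (\<lambda>a x. a \<cdot> \<sigma> x) e w \<noteq> z"
  shows "\<exists>l. l \<noteq> [] \<and> set l \<subseteq> schreier_gens \<and> lprod f l = to_group (foldl (\<lambda>a x. a \<cdot> \<sigma> x) e w)"
  using assms
proof (induction w rule: rev_induct)
  case Nil then show ?case unfolding schreier_gens_def by (intro exI[of _ "[to_group e]"]) auto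
next
  case (snoc x w)
  define p where "p = foldl (\<lambda>a x. a \<cdot> \<sigma> x) e w"
  have pS: "p \<in> S" unfolding p_def using snoc.prems(1) by (induction w rule: rev_induct) auto
  have x: "x \<in> X" and px: "p \<cdot> \<sigma> x \<noteq> z" using snoc.prems unfolding p_def by auto
  then have pz: "p \<noteq> z" using pS by auto
  obtain l where l: "l \<noteq> []" "set l \<subseteq> schreier_gens" "lprod f l = to_group p"
    using snoc.IH snoc.prems pz unfolding p_def by auto
  have "rep (lideal p) \<cdot> \<sigma> x \<noteq> z" using prod_zero_iff_rep pS pz x px by simp
  then have "to_group (rep (lideal p) \<cdot> \<sigma> x) \<in> schreier_gens"
    using step_in_schreier_gens lideal_in_lclasses pS pz x by blast
  moreover have "to_group (p \<cdot> \<sigma> x) = lprod f (l @ [to_group (rep (lideal p) \<cdot> \<sigma> x)])"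
    using to_group_mult[OF pS pz _ px] x l by (simp add: lprod_snoc)
  ultimately show ?case using l unfolding p_def
    by (intro exI[of _ "l @ [to_group (rep (lideal p) \<cdot> \<sigma> x)]"]) (auto simp: p_def)
qed

lemma maxgroup_in_span:
  assumes h: "h \<in> maxgroup e" shows "\<exists>l. l \<noteq> [] \<and> set l \<subseteq> schreier_gens \<and> lprod f l = h"
proof -
  note hS = maxgroupD[OF h]
  obtain w where w: "w \<noteq> []" "set w \<subseteq> X" "word_val f \<sigma> w = h" using gen_surj hS by blast
  have "foldl (\<lambda>a x. a \<cdot> \<sigma> x) e w = e \<cdot> word_val f \<sigma> w" if "w \<noteq> []" "set w \<subseteq> X" for w
    using that
  proof (induction w rule: rev_induct)
    case (snoc x w)
    then show ?case by (cases "w = []") (auto simp: word_val_snoc assoc word_val_in)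
  qed simp
  then have "foldl (\<lambda>a x. a \<cdot> \<sigma> x) e w = h" using w hS by simp
  then obtain l where l: "l \<noteq> []" "set l \<subseteq> schreier_gens" "lprod f l = to_group h"
    using to_group_prefix_in_span[OF w(2)] hS by auto
  have "h = to_group h \<cdot> (rep (lideal h) \<cdot> e)"
    using to_group_rep[OF hS(1,2)] to_group_closed[OF hS(1,2)] hS(4)
      rep(1)[OF lideal_in_lclasses[OF hS(1,2)]] by (simp flip: assoc)
  moreover have "rep (lideal h) \<cdot> e \<noteq> z" using prod_zero_iff_rep[of h e] hS by simp
  then have "rep (lideal h) \<cdot> e \<in> schreier_gens"
    unfolding schreier_gens_def using lideal_in_lclasses hS by blast
  ultimately show ?thesis using l by (intro exI[of _ "l @ [rep (lideal h) \<cdot> e]"]) (auto simp: lprod_snoc)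
qed

lemma finite_generators_maxgroup:
  assumes "finite Y" "\<tau> ` Y = schreier_gens" shows "finite_generators (maxgroup e) f Y \<tau>"
proof (rule finite_generators_image)
  show "\<tau> ` Y \<subseteq> maxgroup e" using assms(2) schreier_gens_subset by simp
  show "\<exists>l. l \<noteq> [] \<and> set l \<subseteq> \<tau> ` Y \<and> lprod f l = h" if "h \<in> maxgroup e" for h
    using maxgroup_in_span[OF that] assms(2) by simp
qed (rule assms(1))

lemma schreier_alphabet: obtains Y :: "nat set" and \<tau> where "finite Y" "\<tau> ` Y = schreier_gens"
proof -
  obtain \<tau> where "bij_betw \<tau> {0..<card schreier_gens} schreier_gens"
    using ex_bij_betw_nat_finite[OF finite_schreier_gens] by blast
  then show ?thesis using that[of "{0..<card schreier_gens}" \<tau>] by (simp add: bij_betw_def)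
qed

lemma fin_generated_maxgroup: "fin_generated (maxgroup e) f"
proof -
  obtain Y :: "nat set" and \<tau> where "finite Y" "\<tau> ` Y = schreier_gens" by (rule schreier_alphabet)
  then show ?thesis unfolding fin_generated_def using finite_generators_maxgroup by blast
qed

end

section \<open>Loops decompose into excursions\<close>

fun loop_edge :: "'a set \<Rightarrow> ('a \<Rightarrow> 'a \<Rightarrow> 'a) \<Rightarrow> nat set \<Rightarrow> (nat \<Rightarrow> 'a)
    \<Rightarrow> 'a option \<Rightarrow> nat + nat \<Rightarrow> 'a option \<Rightarrow> bool" where
  "loop_edge S f X \<sigma> p (Inl x) q \<longleftrightarrow>
     x \<in> X \<and> p \<in> vertices1 S \<and> q \<in> vertices1 S \<and> q = act1 f p (\<sigma> x)"
| "loop_edge S f X \<sigma> p (Inr x) q \<longleftrightarrow>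
     x \<in> X \<and> p \<in> vertices1 S \<and> q \<in> vertices1 S \<and> act1 f q (\<sigma> x) = p"

lemma vertices1_simps [simp]: "None \<in> vertices1 S" "Some b \<in> vertices1 S \<longleftrightarrow> b \<in> S"
  unfolding vertices1_def by auto

lemma loop_path_iff_run:
  assumes gen: "\<forall>x\<in>X. \<sigma> x \<in> S" and closed: "\<forall>a\<in>S. \<forall>b\<in>S. f a b \<in> S"
  shows "loop_path S f X \<sigma> p w q \<longleftrightarrow> p \<in> vertices1 S \<and> run (loop_edge S f X \<sigma>) p w q"
proof
  have act1_in: "act1 f p (\<sigma> x) \<in> vertices1 S" if "p \<in> vertices1 S" "x \<in> X" for p x
    using that gen closed by (cases p) auto
  show "p \<in> vertices1 S \<and> run (loop_edge S f X \<sigma>) p w q" if "loop_path S f X \<sigma> p w q"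
    using that by induction (auto simp: act1_in)
  show "loop_path S f X \<sigma> p w q" if "p \<in> vertices1 S \<and> run (loop_edge S f X \<sigma>) p w q"
  proof -
    have "run (loop_edge S f X \<sigma>) p w q" "p \<in> vertices1 S" using that by auto
    then show ?thesis
    proof (induction rule: run.induct)
      case (run_cons s l s' w t)
      then show ?case by (cases l) (auto intro: lp_fwd lp_bwd)
    qed (rule lp_nil)
  qed
qed

lemma loop_problem_eq_run:
  assumes "\<forall>x\<in>X. \<sigma> x \<in> S" and "\<forall>a\<in>S. \<forall>b\<in>S. f a b \<in> S"
  shows "loop_problem S f X \<sigma> = {w. run (loop_edge S f X \<sigma>) None w None}"
  unfolding loop_problem_def loop_path_iff_run[OF assms] by simp

context czs_generated
begin

fun sedge :: "'a \<Rightarrow> nat + nat \<Rightarrow> 'a \<Rightarrow> bool" where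
  "sedge b (Inl x) b' \<longleftrightarrow> x \<in> X \<and> b \<in> S \<and> b' = b \<cdot> \<sigma> x"
| "sedge b (Inr x) b' \<longleftrightarrow> x \<in> X \<and> b' \<in> S \<and> b' \<cdot> \<sigma> x = b"

definition excursions :: "(nat + nat) list set" where
  "excursions = {Inl x # w @ [Inr y] | x y w. x \<in> X \<and> y \<in> X \<and> run sedge (\<sigma> x) w (\<sigma> y)}"

lemma sedge_in: "sedge b l b' \<Longrightarrow> b \<in> S \<and> b' \<in> S"
  by (cases l) auto

lemma loop_problem_S: "loop_problem S f X \<sigma> = {w. run (loop_edge S f X \<sigma>) None w None}"
  by (rule loop_problem_eq_run) auto

lemma run_sedge_loop_edge: "run sedge b w c \<Longrightarrow> run (loop_edge S f X \<sigma>) (Some b) w (Some c)"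
proof (induction rule: run.induct)
  case (run_cons b l b' w c)
  then have "loop_edge S f X \<sigma> (Some b) l (Some b')" by (cases l) auto
  then show ?case using run_cons.IH by auto
qed simp

lemma excursion_loop: "u \<in> excursions \<Longrightarrow> run (loop_edge S f X \<sigma>) None u None"
  unfolding excursions_def by (auto simp: run_append_iff intro: run_sedge_loop_edge)

lemma loop_edge_from_one:
  "loop_edge S f X \<sigma> None l p \<Longrightarrow> \<exists>x. l = Inl x \<and> x \<in> X \<and> p = Some (\<sigma> x)"
  by (cases l; cases p) auto

lemma run_to_one_split:
  "run (loop_edge S f X \<sigma>) (Some b) w None \<Longrightarrow>
   \<exists>w1 y w2. w = w1 @ Inr y # w2 \<and> y \<in> X \<and> run sedge b w1 (\<sigma> y) \<and> run (loop_edge S f X \<sigma>) None w2 None"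
proof (induction w arbitrary: b)
  case (Cons l w)
  then obtain p where p: "loop_edge S f X \<sigma> (Some b) l p" "run (loop_edge S f X \<sigma>) p w None" by auto
  show ?case
  proof (cases "\<exists>b'. p = Some b'")
    case True
    then obtain b' where b': "p = Some b'" by blast
    then have "sedge b l b'" using p(1) by (cases l) auto
    moreover obtain w1 y w2 where "w = w1 @ Inr y # w2" "y \<in> X" "run sedge b' w1 (\<sigma> y)"
      "run (loop_edge S f X \<sigma>) None w2 None" using Cons.IH p(2) b' by blast
    ultimately show ?thesis by (intro exI[of _ "l # w1"]) auto
  next
    case False
    then have "p = None" by simp
    then obtain y where "l = Inr y" "y \<in> X" "b = \<sigma> y" using p(1) by (cases l) auto
    then show ?thesis using p(2) \<open>p = None\<close> by (intro exI[of _ "[]"]) auto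
  qed
qed simp

lemma loop_problem_eq_star_excursions: "loop_problem S f X \<sigma> = kleene_star excursions"
proof (intro set_eqI iffI)
  fix w assume "w \<in> loop_problem S f X \<sigma>"
  then have "run (loop_edge S f X \<sigma>) None w None" unfolding loop_problem_S by simp
  then show "w \<in> kleene_star excursions"
  proof (induction "length w" arbitrary: w rule: less_induct)
    case less
    show ?case
    proof (cases w)
      case (Cons l w')
      then obtain p where "loop_edge S f X \<sigma> None l p" "run (loop_edge S f X \<sigma>) p w' None"
        using less.prems by auto
      then obtain x where x: "l = Inl x" "x \<in> X" "run (loop_edge S f X \<sigma>) (Some (\<sigma> x)) w' None"
        using loop_edge_from_one by blast
      then obtain w1 y w2 where W: "w' = w1 @ Inr y # w2" "y \<in> X" "run sedge (\<sigma> x) w1 (\<sigma> y)"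
          "run (loop_edge S f X \<sigma>) None w2 None"
        using run_to_one_split by blast
      have "Inl x # w1 @ [Inr y] \<in> excursions" unfolding excursions_def using x W by blast
      moreover have "w2 \<in> kleene_star excursions" using less.hyps W Cons by simp
      ultimately show ?thesis using Cons x W append_in_kleene_star by fastforce
    qed (simp add: Nil_in_kleene_star)
  qed
next
  fix w assume "w \<in> kleene_star excursions"
  then obtain ws where ws: "set ws \<subseteq> excursions" "w = concat ws" unfolding kleene_star_def by auto
  have "run (loop_edge S f X \<sigma>) None (concat ws) None" using ws(1)
    by (induction ws) (auto simp: run_append_iff dest: excursion_loop)
  then show "w \<in> loop_problem S f X \<sigma>" unfolding loop_problem_S using ws by simp
qed

definition exits_from :: "'a \<Rightarrow> (nat + nat) list \<Rightarrow> bool" where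
  "exits_from b w \<longleftrightarrow> (\<exists>w' y. w = w' @ [Inr y] \<and> y \<in> X \<and> run sedge b w' (\<sigma> y))"

lemma exits_from_Cons:
  assumes "sedge b l b'" "exits_from b' w" shows "exits_from b (l # w)"
proof -
  obtain w' y where "w = w' @ [Inr y]" "y \<in> X" "run sedge b' w' (\<sigma> y)"
    using assms(2) unfolding exits_from_def by blast
  then show ?thesis unfolding exits_from_def using assms(1) by (intro exI[of _ "l # w'"] exI[of _ y]) auto
qed

lemma exits_from_gen: "y \<in> X \<Longrightarrow> exits_from (\<sigma> y) [Inr y]"
  unfolding exits_from_def by force

lemma Inl_exits_from_in_excursions:
  assumes "x \<in> X" "exits_from (\<sigma> x) w" shows "Inl x # w \<in> excursions"
proof -
  obtain w' y where "w = w' @ [Inr y]" "y \<in> X" "run sedge (\<sigma> x) w' (\<sigma> y)"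
    using assms(2) unfolding exits_from_def by blast
  then show ?thesis unfolding excursions_def using assms(1) by blast
qed

definition nzedge :: "'a \<Rightarrow> nat + nat \<Rightarrow> 'a \<Rightarrow> bool" where
  "nzedge b l b' \<longleftrightarrow> sedge b l b' \<and> b' \<noteq> z"

lemma run_sedge_split:
  "run sedge b w c \<Longrightarrow>
   (b \<noteq> z \<and> run nzedge b w c) \<or> (\<exists>w1 w2. w = w1 @ w2 \<and> run sedge b w1 z \<and> run sedge z w2 c)"
proof (induction rule: run.induct)
  case (run_nil b)
  then show ?case by (cases "b = z") auto
next
  case (run_cons b l b' w c)
  show ?case
  proof (cases "b = z")
    case True
    then show ?thesis using run_cons.hyps by (intro disjI2 exI[of _ "[]"] exI[of _ "l # w"]) auto
  next
    case False
    from run_cons.IH show ?thesis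
    proof
      assume "b' \<noteq> z \<and> run nzedge b' w c"
      then show ?thesis using False run_cons.hyps(1) unfolding nzedge_def by auto
    next
      assume "\<exists>w1 w2. w = w1 @ w2 \<and> run sedge b' w1 z \<and> run sedge z w2 c"
      then obtain w1 w2 where "w = w1 @ w2" "run sedge b' w1 z" "run sedge z w2 c" by blast
      then show ?thesis using run_cons.hyps(1) by (intro disjI2 exI[of _ "l # w1"] exI[of _ w2]) auto
    qed
  qed
qed

end

section \<open>Excursions through zero\<close>

datatype 'q astate = Start | Final | Mid 'q

context czs_generated
begin

text \<open>Abstracting an element to its left ideal turns the internal steps into a finite automaton
  that simulates them forwards (\<open>lstep_forward\<close>) and backwards (\<open>lstep_backward\<close>).\<close>

definition lclass :: "'a \<Rightarrow> 'a set option" where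
  "lclass b = (if b = z then None else Some (lideal b))"

fun lstep :: "'a set option \<Rightarrow> nat + nat \<Rightarrow> 'a set option \<Rightarrow> bool" where
  "lstep None (Inl x) s' \<longleftrightarrow> x \<in> X \<and> s' = None"
| "lstep (Some L) (Inl x) s' \<longleftrightarrow> x \<in> X \<and> L \<in> lclasses \<and>
     s' = (if rep L \<cdot> \<sigma> x = z then None else Some (lideal (\<sigma> x)))"
| "lstep None (Inr x) s' \<longleftrightarrow> x \<in> X \<and>
     (s' = None \<or> (\<exists>L'. s' = Some L' \<and> L' \<in> lclasses \<and> rep L' \<cdot> \<sigma> x = z))"
| "lstep (Some L) (Inr x) s' \<longleftrightarrow> x \<in> X \<and> \<sigma> x \<noteq> z \<and> L = lideal (\<sigma> x) \<and>
     (\<exists>L'. s' = Some L' \<and> L' \<in> lclasses \<and> rep L' \<cdot> \<sigma> x \<noteq> z)"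

lemma lclass_None_iff [simp]: "lclass b = None \<longleftrightarrow> b = z" "None = lclass b \<longleftrightarrow> b = z"
  and lclass_zero [simp]: "lclass z = None"
  unfolding lclass_def by simp_all

lemma lclass_nonzero: "b \<noteq> z \<Longrightarrow> lclass b = Some (lideal b)"
  unfolding lclass_def by simp

lemma lclass_rep: "L \<in> lclasses \<Longrightarrow> lclass (rep L) = Some L"
  using rep lclass_nonzero by simp

lemma lstep_sedge_Inl:
  assumes x: "x \<in> X" "b \<in> S" shows "lstep (lclass b) (Inl x) (lclass (b \<cdot> \<sigma> x))"
proof (cases "b = z")
  case False
  have L: "lclass b = Some (lideal b)" "lideal b \<in> lclasses"
    using lclass_nonzero lideal_in_lclasses x(2) False by auto
  have "lclass (b \<cdot> \<sigma> x) = (if rep (lideal b) \<cdot> \<sigma> x = z then None else Some (lideal (\<sigma> x)))"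
  proof (cases "b \<cdot> \<sigma> x = z")
    case True
    then show ?thesis using prod_zero_iff_rep[OF x(2) False] x by simp
  next
    case nz: False
    then have "lideal (b \<cdot> \<sigma> x) = lideal (\<sigma> x)" using lideal_mult x by simp
    then show ?thesis using prod_zero_iff_rep[OF x(2) False] x nz lclass_nonzero by simp
  qed
  then show ?thesis using L x(1) by simp
qed (use x in simp)

lemma lstep_sedge_Inr:
  assumes x: "x \<in> X" "b' \<in> S" shows "lstep (lclass (b' \<cdot> \<sigma> x)) (Inr x) (lclass b')"
proof (cases "b' = z")
  case b': False
  have L: "lclass b' = Some (lideal b')" "lideal b' \<in> lclasses"
    using lclass_nonzero lideal_in_lclasses x(2) b' by auto
  have iff: "b' \<cdot> \<sigma> x = z \<longleftrightarrow> rep (lideal b') \<cdot> \<sigma> x = z"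
    using prod_zero_iff_rep[OF x(2) b' gen_in[OF x(1)]] by simp
  show ?thesis
  proof (cases "b' \<cdot> \<sigma> x = z")
    case True
    then show ?thesis using x(1) L iff by simp
  next
    case False
    then have "\<sigma> x \<noteq> z" using x by (metis zero_right)
    moreover have "lideal (b' \<cdot> \<sigma> x) = lideal (\<sigma> x)"
      using lideal_mult[OF x(2) gen_in[OF x(1)]] False by simp
    ultimately show ?thesis using x(1) L iff False lclass_nonzero[OF False] by simp
  qed
qed (use x in simp)

lemma lstep_sedge:
  assumes "sedge b l b'" shows "lstep (lclass b) l (lclass b')"
proof (cases l)
  case (Inl x)
  then show ?thesis using assms lstep_sedge_Inl[of x b] by auto
next
  case (Inr x)
  then show ?thesis using assms lstep_sedge_Inr[of x b'] by auto
qed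

lemma lstep_forward:
  assumes st: "lstep s l s'" and b: "b \<in> S" "s = lclass b"
  shows "\<exists>b'. sedge b l b' \<and> s' = lclass b'"
proof (cases l)
  case (Inl x)
  then have x: "x \<in> X" using st by (cases s) auto
  then have "sedge b l (b \<cdot> \<sigma> x)" using Inl b by simp
  moreover have "s' = lclass (b \<cdot> \<sigma> x)"
  proof -
    have "lstep s l (lclass (b \<cdot> \<sigma> x))" using lstep_sedge[OF calculation] b by simp
    then show ?thesis using st Inl by (cases s) auto
  qed
  ultimately show ?thesis by blast
next
  case (Inr x)
  show ?thesis
  proof (cases "b = z")
    case True
    then have x: "x \<in> X" and "s' = None \<or> (\<exists>L'. s' = Some L' \<and> L' \<in> lclasses \<and> rep L' \<cdot> \<sigma> x = z)"
      using st Inr b by auto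
    then consider "s' = None" | L' where "s' = Some L'" "L' \<in> lclasses" "rep L' \<cdot> \<sigma> x = z" by blast
    then show ?thesis
    proof cases
      case 1
      then show ?thesis using True x Inr by (intro exI[of _ z]) simp
    next
      case 2
      then show ?thesis using True x Inr rep[OF 2(2)] lclass_rep[OF 2(2)] by (intro exI[of _ "rep L'"]) simp
    qed
  next
    case False
    then obtain L' where x: "x \<in> X" "\<sigma> x \<noteq> z" "lideal b = lideal (\<sigma> x)" "s' = Some L'"
        "L' \<in> lclasses" "rep L' \<cdot> \<sigma> x \<noteq> z"
      using st Inr b lclass_nonzero by auto
    then obtain d where d: "d \<in> S" "d \<noteq> z" "lideal d = L'" "d \<cdot> \<sigma> x = b"
      using lideal_predecessor[OF b(1) False _ x(3) x(5,6)] by auto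
    then show ?thesis using Inr x lclass_nonzero[OF d(2)] by (intro exI[of _ d]) simp
  qed
qed

lemma lstep_backward_Inl:
  assumes st: "lstep s (Inl x) s'" and b': "b' \<in> S" "s' = lclass b'"
  shows "\<exists>b. sedge b (Inl x) b' \<and> s = lclass b"
proof (cases s)
  case None
  then have "x \<in> X" "b' = z" using st b' by auto
  then show ?thesis using None by (intro exI[of _ z]) simp
next
  case (Some L)
  then have x: "x \<in> X" "L \<in> lclasses"
    and s': "s' = (if rep L \<cdot> \<sigma> x = z then None else Some (lideal (\<sigma> x)))"
    using st by auto
  show ?thesis
  proof (cases "rep L \<cdot> \<sigma> x = z")
    case True
    then have "b' = z" using s' b'(2) by simp
    then show ?thesis using True Some x rep[OF x(2)] lclass_rep[OF x(2)] by (intro exI[of _ "rep L"]) simp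
  next
    case False
    then have "b' \<noteq> z" "lideal b' = lideal (\<sigma> x)"
      using s' b'(2) unfolding lclass_def by (auto split: if_splits)
    then obtain d where d: "d \<in> S" "d \<noteq> z" "lideal d = L" "d \<cdot> \<sigma> x = b'"
      using lideal_predecessor[OF b'(1) _ _ _ x(2) False] x(1) by auto
    then show ?thesis using Some x lclass_nonzero[OF d(2)] by (intro exI[of _ d]) simp
  qed
qed

lemma lstep_backward_Inr:
  assumes st: "lstep s (Inr x) s'" and b': "b' \<in> S" "s' = lclass b'"
  shows "\<exists>b. sedge b (Inr x) b' \<and> s = lclass b"
proof -
  have x: "x \<in> X" using st by (cases s) auto
  show ?thesis
  proof (cases s)
    case None
    have "b' \<cdot> \<sigma> x = z"
    proof (cases "b' = z")
      case False
      then obtain L' where "s' = Some L'" "rep L' \<cdot> \<sigma> x = z" using st None b'(2) by auto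
      then show ?thesis using prod_zero_iff_rep[OF b'(1) False gen_in[OF x]] b'(2) False lclass_nonzero by simp
    qed (use b' x in simp)
    then show ?thesis using None x b' by (intro exI[of _ z]) simp
  next
    case (Some L)
    then obtain L' where L: "\<sigma> x \<noteq> z" "L = lideal (\<sigma> x)" "s' = Some L'" "L' \<in> lclasses"
        "rep L' \<cdot> \<sigma> x \<noteq> z"
      using st by auto
    then have "b' \<noteq> z" "lideal b' = L'" using b'(2) lclass_def by (auto split: if_splits)
    then have nz: "b' \<cdot> \<sigma> x \<noteq> z" using prod_zero_iff_rep[OF b'(1) _ gen_in[OF x]] L by simp
    then have "lclass (b' \<cdot> \<sigma> x) = Some L"
      using lclass_nonzero lideal_mult[OF b'(1) gen_in[OF x] nz] L(2) by simp
    then show ?thesis using Some x b' by (intro exI[of _ "b' \<cdot> \<sigma> x"]) simp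
  qed
qed

lemma lstep_backward: "lstep s l s' \<Longrightarrow> b' \<in> S \<Longrightarrow> s' = lclass b' \<Longrightarrow> \<exists>b. sedge b l b' \<and> s = lclass b"
  by (cases l) (simp_all only: lstep_backward_Inl lstep_backward_Inr)

lemma lclass_in: "b \<in> S \<Longrightarrow> lclass b \<in> insert None (Some ` lclasses)"
  unfolding lclass_def using lideal_in_lclasses by simp

lemma lstep_dom:
  assumes "lstep s l s'"
  shows "s \<in> insert None (Some ` lclasses)" "s' \<in> insert None (Some ` lclasses)" "l \<in> Inl ` X \<union> Inr ` X"
proof -
  show "l \<in> Inl ` X \<union> Inr ` X" using assms by (cases s; cases l) auto
  show "s \<in> insert None (Some ` lclasses)" using assms lideal_in_lclasses by (cases s; cases l) auto
  have "\<sigma> x \<noteq> z" if "rep L \<cdot> \<sigma> x \<noteq> z" "L \<in> lclasses" "x \<in> X" for L x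
    using that rep(1) by (metis zero_right)
  then show "s' \<in> insert None (Some ` lclasses)"
    using assms lideal_in_lclasses by (cases s; cases l) auto
qed

text \<open>The flag of a middle state records whether the path has already visited zero.\<close>

inductive zero_step :: "(bool \<times> 'a set option) astate \<Rightarrow> nat + nat \<Rightarrow> (bool \<times> 'a set option) astate \<Rightarrow> bool" where
  zs_start: "x \<in> X \<Longrightarrow> zero_step Start (Inl x) (Mid (\<sigma> x = z, lclass (\<sigma> x)))"
| zs_mid: "lstep s l s' \<Longrightarrow> zero_step (Mid (v, s)) l (Mid (v \<or> s' = None, s'))"
| zs_final: "y \<in> X \<Longrightarrow> zero_step (Mid (True, lclass (\<sigma> y))) (Inr y) Final"

lemma finite_zero_step: "finite {(p, l, p'). zero_step p l p'}"
proof -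
  define Q :: "(bool \<times> 'a set option) astate set"
    where "Q = {Start, Final} \<union> Mid ` (UNIV \<times> insert None (Some ` lclasses))"
  have Q: "Start \<in> Q" "Final \<in> Q" "\<And>v s. s \<in> insert None (Some ` lclasses) \<Longrightarrow> Mid (v, s) \<in> Q"
    unfolding Q_def by auto
  have "{(p, l, p'). zero_step p l p'} \<subseteq> Q \<times> (Inl ` X \<union> Inr ` X) \<times> Q"
    by (auto elim!: zero_step.cases intro: Q Q(3)[OF lclass_in[OF gen_in]] dest: lstep_dom)
  moreover have "finite (Q \<times> (Inl ` X \<union> Inr ` X) \<times> Q)"
    unfolding Q_def using finite_lclasses finite_X by simp
  ultimately show ?thesis by (rule finite_subset)
qed

lemma run_zero_step_Final: "run zero_step Final w q \<Longrightarrow> w = []"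
  by (cases w) (auto elim: zero_step.cases)

lemma zero_step_sound_visited:
  "run zero_step p w q \<Longrightarrow> q = Final \<Longrightarrow> p = Mid (True, s) \<Longrightarrow> \<exists>b\<in>S. s = lclass b \<and> exits_from b w"
proof (induction p w q arbitrary: s rule: run.induct)
  case (run_cons p l p' w q)
  from run_cons.hyps(1) show ?case unfolding run_cons.prems(2)
  proof cases
    case (zs_mid s')
    then obtain b' where "b' \<in> S" "s' = lclass b'" "exits_from b' w"
      using run_cons.IH run_cons.prems(1) by auto
    moreover obtain b where "sedge b l b'" "s = lclass b" using lstep_backward zs_mid calculation by blast
    ultimately show ?thesis using exits_from_Cons sedge_in by blast
  next
    case (zs_final y)
    then have "w = []" using run_zero_step_Final run_cons.hyps(2) by simp
    then show ?thesis using zs_final exits_from_gen by auto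
  qed
qed simp

lemma zero_step_sound_unvisited:
  "run zero_step p w q \<Longrightarrow> q = Final \<Longrightarrow> p = Mid (False, s) \<Longrightarrow> b \<in> S \<Longrightarrow> s = lclass b \<Longrightarrow> exits_from b w"
proof (induction p w q arbitrary: s b rule: run.induct)
  case (run_cons p l p' w q)
  from run_cons.hyps(1) show ?case unfolding run_cons.prems(2)
  proof cases
    case (zs_mid s')
    obtain b' where b': "sedge b l b'" "s' = lclass b'"
      using lstep_forward zs_mid run_cons.prems by blast
    have "exits_from b' w"
    proof (cases "b' = z")
      case True
      then have "run zero_step (Mid (True, s')) w Final"
        using run_cons.hyps(2) run_cons.prems(1) zs_mid b'(2) by simp
      then obtain b'' where "s' = lclass b''" "exits_from b'' w"
        using zero_step_sound_visited by blast
      then show ?thesis using True b'(2) by simp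
    next
      case False
      then show ?thesis using run_cons.IH run_cons.prems(1) zs_mid b' sedge_in by auto
    qed
    then show ?thesis using exits_from_Cons b'(1) by blast
  qed simp
qed simp

lemma zero_step_sound: "run zero_step Start w Final \<Longrightarrow> w \<in> excursions"
proof (cases w)
  case (Cons l w')
  assume run: "run zero_step Start w Final"
  then obtain x where x: "l = Inl x" "x \<in> X" "run zero_step (Mid (\<sigma> x = z, lclass (\<sigma> x))) w' Final"
    using Cons by (auto elim: zero_step.cases)
  have "exits_from (\<sigma> x) w'"
  proof (cases "\<sigma> x = z")
    case True
    then have "run zero_step (Mid (True, None)) w' Final" using x(3) by simp
    then obtain b where "None = lclass b" "exits_from b w'" using zero_step_sound_visited by blast
    then show ?thesis using True by simp
  next
    case False
    then show ?thesis using zero_step_sound_unvisited[OF x(3) refl] x(2) by simp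
  qed
  then show ?thesis using Cons x Inl_exits_from_in_excursions by simp
qed (auto elim: zero_step.cases)

lemma zero_step_simulates:
  "run sedge b w c \<Longrightarrow>
   \<exists>v'. run zero_step (Mid (v, lclass b)) w (Mid (v', lclass c)) \<and> (v \<or> c = z \<and> w \<noteq> [] \<longrightarrow> v')"
proof (induction b w c arbitrary: v rule: run.induct)
  case (run_nil b)
  then show ?case by (intro exI[of _ v]) simp
next
  case (run_cons b l b' w c)
  obtain v' where v': "run zero_step (Mid (v \<or> b' = z, lclass b')) w (Mid (v', lclass c))"
      "(v \<or> b' = z) \<or> c = z \<and> w \<noteq> [] \<longrightarrow> v'"
    using run_cons.IH by blast
  have "zero_step (Mid (v, lclass b)) l (Mid (v \<or> b' = z, lclass b'))"
    using zs_mid[OF lstep_sedge[OF run_cons.hyps(1)]] by simp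
  moreover have "v \<or> c = z \<longrightarrow> v'"
  proof (cases "w = []")
    case True
    then have "b' = c" using run_cons.hyps(2) by simp
    then show ?thesis using v'(2) by blast
  qed (use v'(2) in blast)
  ultimately show ?case using v'(1) by (intro exI[of _ v']) auto
qed

lemma zero_step_complete:
  assumes "x \<in> X" "y \<in> X" "run sedge (\<sigma> x) w1 z" "run sedge z w2 (\<sigma> y)"
  shows "run zero_step Start (Inl x # w1 @ w2 @ [Inr y]) Final"
proof -
  obtain v1 where v1: "run zero_step (Mid (\<sigma> x = z, lclass (\<sigma> x))) w1 (Mid (v1, None))"
      "\<sigma> x = z \<or> w1 \<noteq> [] \<longrightarrow> v1"
    using zero_step_simulates[OF assms(3), of "\<sigma> x = z"] by auto
  have v1 using v1(2) assms(3) by (cases "w1 = []") auto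
  obtain v2 where "run zero_step (Mid (v1, None)) w2 (Mid (v2, lclass (\<sigma> y)))" "v1 \<longrightarrow> v2"
    using zero_step_simulates[OF assms(4), of v1] by auto
  then have "run zero_step (Mid (v1, None)) w2 (Mid (True, lclass (\<sigma> y)))" using \<open>v1\<close> by simp
  then show ?thesis using v1(1) zs_start[OF assms(1)] zs_final[OF assms(2)] by (auto simp: run_append_iff)
qed

end

section \<open>Excursions avoiding zero\<close>

context czs_generated
begin

definition right_multiple :: "nat \<Rightarrow> 'a \<Rightarrow> bool" where
  "right_multiple x b \<longleftrightarrow> b = \<sigma> x \<or> (\<exists>t\<in>S. b = \<sigma> x \<cdot> t)"

definition entry_class :: "nat \<Rightarrow> 'a set" where
  "entry_class x = (SOME L. L \<in> lclasses \<and> rep L \<cdot> \<sigma> x \<noteq> z)"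

text \<open>For a letter x, psi x maps the nonzero elements of the right ideal generated by \<open>\<sigma> x\<close>
  into the maximal subgroup, injectively on each left ideal (\<open>psi_inj\<close>), and it turns right
  multiplication by a generator into right multiplication by a Schreier generator
  (\<open>psi_step\<close>).\<close>

definition psi :: "nat \<Rightarrow> 'a \<Rightarrow> 'a" where
  "psi x b = to_group (rep (entry_class x) \<cdot> b)"

lemma entry_class:
  assumes x: "x \<in> X" "\<sigma> x \<noteq> z"
  shows "entry_class x \<in> lclasses" "rep (entry_class x) \<cdot> \<sigma> x \<noteq> z"
proof -
  obtain u v where uv: "u \<in> S" "v \<in> S" "e = u \<cdot> \<sigma> x \<cdot> v" using factor_through_nonzero[of "\<sigma> x" e] x by auto
  then have "e = (e \<cdot> u) \<cdot> \<sigma> x \<cdot> v" using x by (metis assoc closed gen_in idem idem_in)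
  then have nz: "(e \<cdot> u) \<cdot> \<sigma> x \<noteq> z" using uv idem_nonzero by (metis zero_left)
  then have "e \<cdot> u \<noteq> z" using x by (metis gen_in zero_left)
  then have "lideal (e \<cdot> u) \<in> lclasses \<and> rep (lideal (e \<cdot> u)) \<cdot> \<sigma> x \<noteq> z"
    using lideal_in_lclasses prod_zero_iff_rep[of "e \<cdot> u" "\<sigma> x"] nz uv(1) x(1) by simp
  then have "\<exists>L. L \<in> lclasses \<and> rep L \<cdot> \<sigma> x \<noteq> z" by blast
  from someI_ex[OF this] show "entry_class x \<in> lclasses" "rep (entry_class x) \<cdot> \<sigma> x \<noteq> z"
    unfolding entry_class_def by auto
qed

lemma right_multiple_in: "x \<in> X \<Longrightarrow> right_multiple x b \<Longrightarrow> b \<in> S"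
  unfolding right_multiple_def by auto

lemma right_multiple_gen: "right_multiple x (\<sigma> x)"
  unfolding right_multiple_def by simp

lemma right_multiple_mult:
  assumes "x \<in> X" "right_multiple x b" "c \<in> S" shows "right_multiple x (b \<cdot> c)"
  using assms unfolding right_multiple_def by (auto simp: assoc)

lemma right_multiple_div:
  assumes x: "x \<in> X" and c: "c \<in> S" "a \<in> S" "c \<cdot> a \<noteq> z" and b: "right_multiple x (c \<cdot> a)"
  shows "right_multiple x c"
proof -
  obtain t where t: "t \<in> S" "c = c \<cdot> a \<cdot> t" using R_equiv_prod c by blast
  then show ?thesis using right_multiple_mult[OF x b t(1)] by simp
qed

lemma entry_left_inverse:
  assumes x: "x \<in> X" "\<sigma> x \<noteq> z"
  shows "\<exists>\<beta>\<in>S. \<forall>b. right_multiple x b \<longrightarrow> \<beta> \<cdot> (rep (entry_class x) \<cdot> b) = b"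
proof -
  define r where "r = rep (entry_class x)"
  have r: "r \<in> S" "r \<cdot> \<sigma> x \<noteq> z" unfolding r_def using entry_class[OF x] rep(1) by auto
  obtain \<beta> where \<beta>: "\<beta> \<in> S" "\<sigma> x = \<beta> \<cdot> r \<cdot> \<sigma> x"
    using L_equiv_prod[OF r(1) gen_in[OF x(1)] r(2)] by blast
  have "\<beta> \<cdot> (r \<cdot> (\<sigma> x \<cdot> t)) = \<sigma> x \<cdot> t" if "t \<in> S" for t
  proof -
    have "\<beta> \<cdot> (r \<cdot> (\<sigma> x \<cdot> t)) = \<beta> \<cdot> r \<cdot> \<sigma> x \<cdot> t" using \<beta>(1) r(1) that x(1) by (simp add: assoc)
    then show ?thesis using \<beta>(2) by simp
  qed
  moreover have "\<beta> \<cdot> (r \<cdot> \<sigma> x) = \<sigma> x" using \<beta> r(1) x(1) by (simp add: assoc)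
  ultimately have "\<forall>b. right_multiple x b \<longrightarrow> \<beta> \<cdot> (r \<cdot> b) = b"
    unfolding right_multiple_def by blast
  then show ?thesis using \<beta>(1) unfolding r_def by blast
qed

lemma entry_mult_nonzero:
  assumes x: "x \<in> X" "\<sigma> x \<noteq> z" and b: "right_multiple x b" "b \<noteq> z"
  shows "rep (entry_class x) \<cdot> b \<noteq> z"
proof
  obtain \<beta> where "\<beta> \<in> S" "\<beta> \<cdot> (rep (entry_class x) \<cdot> b) = b" using entry_left_inverse[OF x] b by blast
  moreover assume "rep (entry_class x) \<cdot> b = z"
  ultimately show False using b(2) by simp
qed

lemma psi_in:
  assumes x: "x \<in> X" "\<sigma> x \<noteq> z" and b: "right_multiple x b" "b \<noteq> z"
  shows "psi x b \<in> maxgroup e"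
proof -
  note E = rep[OF entry_class(1)[OF x]]
  have "e \<cdot> (rep (entry_class x) \<cdot> b) = rep (entry_class x) \<cdot> b"
    using E right_multiple_in[OF x(1) b(1)] by (simp flip: assoc)
  then show ?thesis unfolding psi_def
    using to_group_in entry_mult_nonzero[OF x b] E(1) right_multiple_in[OF x(1) b(1)] by simp
qed

lemma psi_step:
  assumes x: "x \<in> X" "\<sigma> x \<noteq> z" and b: "right_multiple x b" "b \<noteq> z"
    and x': "x' \<in> X" "b \<cdot> \<sigma> x' \<noteq> z"
  shows "psi x (b \<cdot> \<sigma> x') = psi x b \<cdot> to_group (rep (lideal b) \<cdot> \<sigma> x')"
proof -
  define a where "a = rep (entry_class x)"
  have aS: "a \<in> S" unfolding a_def using rep entry_class x by blast
  have bS: "b \<in> S" using right_multiple_in x b by blast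
  have ab: "a \<cdot> b \<noteq> z" unfolding a_def using entry_mult_nonzero x b by blast
  have "a \<cdot> (b \<cdot> \<sigma> x') \<noteq> z" unfolding a_def
    using entry_mult_nonzero[OF x right_multiple_mult[OF x(1) b(1)]] x' by simp
  then have "to_group (a \<cdot> b \<cdot> \<sigma> x') = to_group (a \<cdot> b) \<cdot> to_group (rep (lideal (a \<cdot> b)) \<cdot> \<sigma> x')"
    using to_group_mult[of "a \<cdot> b" "\<sigma> x'"] aS bS ab x' by (simp add: assoc)
  moreover have "lideal (a \<cdot> b) = lideal b" using lideal_mult aS bS ab by blast
  ultimately show ?thesis unfolding psi_def a_def[symmetric] using aS bS x' by (simp add: assoc)
qed

lemma psi_inj:
  assumes x: "x \<in> X" "\<sigma> x \<noteq> z"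
    and b: "right_multiple x b" "b \<noteq> z" and b': "right_multiple x b'" "b' \<noteq> z"
    and "lideal b = lideal b'" "psi x b = psi x b'"
  shows "b = b'"
proof -
  define a where "a = rep (entry_class x)"
  have aS: "a \<in> S" unfolding a_def using rep entry_class x by blast
  have "lideal (a \<cdot> c) = lideal c" "a \<cdot> c = psi x c \<cdot> rep (lideal c)" if "right_multiple x c" "c \<noteq> z" for c
  proof -
    have "a \<cdot> c \<noteq> z" "c \<in> S" unfolding a_def using entry_mult_nonzero right_multiple_in x that by auto
    then show "lideal (a \<cdot> c) = lideal c" "a \<cdot> c = psi x c \<cdot> rep (lideal c)"
      using lideal_mult[OF aS] to_group_rep[of "a \<cdot> c"] aS unfolding psi_def a_def[symmetric] by auto
  qed
  then have "a \<cdot> b = a \<cdot> b'" using assms by metis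
  moreover obtain \<beta> where "\<forall>c. right_multiple x c \<longrightarrow> \<beta> \<cdot> (a \<cdot> c) = c"
    using entry_left_inverse[OF x] unfolding a_def by blast
  ultimately show ?thesis using b b' by metis
qed

end

locale czs_group_alphabet = czs_generated +
  fixes Y :: "nat set" and \<tau> :: "nat \<Rightarrow> 'a"
  assumes finite_Y: "finite Y" and alphabet: "\<tau> ` Y = schreier_gens"
begin

definition letter :: "'a \<Rightarrow> nat" where
  "letter g = inv_into Y \<tau> g"

lemma letter: "g \<in> schreier_gens \<Longrightarrow> letter g \<in> Y \<and> \<tau> (letter g) = g"
  unfolding letter_def using alphabet inv_into_into[of g \<tau> Y] f_inv_into_f[of g \<tau> Y] by simp

lemma alphabet_in: "j \<in> Y \<Longrightarrow> \<tau> j \<in> maxgroup e"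
  using alphabet schreier_gens_subset by blast

lemma letter_step:
  assumes "L \<in> lclasses" "x \<in> X" "rep L \<cdot> \<sigma> x \<noteq> z"
  shows "letter (to_group (rep L \<cdot> \<sigma> x)) \<in> Y" "\<tau> (letter (to_group (rep L \<cdot> \<sigma> x))) = to_group (rep L \<cdot> \<sigma> x)"
  using letter step_in_schreier_gens[OF assms] by simp_all

lemma letter_psi:
  assumes "x \<in> X" "\<sigma> x \<noteq> z" "y \<in> X" "right_multiple x (\<sigma> y)" "\<sigma> y \<noteq> z"
  shows "letter (psi x (\<sigma> y)) \<in> Y" "\<tau> (letter (psi x (\<sigma> y))) = psi x (\<sigma> y)"
  using letter_step[OF entry_class(1) assms(3) entry_mult_nonzero, OF assms(1,2,1,2,4,5)]
  unfolding psi_def by simp_all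

lemma loop_problem_maxgroup:
  "loop_problem (maxgroup e) f Y \<tau> = {w. run (loop_edge (maxgroup e) f Y \<tau>) None w None}"
  by (rule loop_problem_eq_run) (auto simp: alphabet_in maxgroup_mult)

fun gedge :: "'a \<Rightarrow> nat + nat \<Rightarrow> 'a \<Rightarrow> bool" where
  "gedge h (Inl j) h' \<longleftrightarrow> j \<in> Y \<and> h \<in> maxgroup e \<and> h' = h \<cdot> \<tau> j"
| "gedge h (Inr j) h' \<longleftrightarrow> j \<in> Y \<and> h' \<in> maxgroup e \<and> h' \<cdot> \<tau> j = h"

text \<open>Identifying the adjoined identity with e turns loops of the group into closed walks at e.\<close>

lemma run_loop_edge_gedge:
  assumes "run (loop_edge (maxgroup e) f Y \<tau>) None w None" shows "run gedge e w e"
proof -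
  let ?base = "case_option e id"
  have "gedge (?base p) l (?base p')" if "loop_edge (maxgroup e) f Y \<tau> p l p'" for p l p'
  proof (cases l)
    case (Inl j)
    then show ?thesis using that alphabet_in[of j] idem_in_maxgroup maxgroupD(3)
      by (cases p) auto
  next
    case (Inr j)
    then show ?thesis using that alphabet_in[of j] idem_in_maxgroup maxgroupD(3)
      by (cases p') auto
  qed
  then have "\<exists>h'. run gedge e w h' \<and> h' = ?base None"
    using run_simulation[OF assms, of "\<lambda>p h. h = ?base p" e] by auto
  then show ?thesis by simp
qed

text \<open>The transducer reads a letter of the group alphabet together with a letter of X; its
  middle states record the first letter of the excursion and the left ideal of the current
  element.\<close>

inductive nz_step :: "(nat \<times> 'a set) astate \<Rightarrow> (nat + nat) \<times> (nat + nat) \<Rightarrow> (nat \<times> 'a set) astate \<Rightarrow> bool" where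
  nz_start: "x \<in> X \<Longrightarrow> \<sigma> x \<noteq> z \<Longrightarrow>
    nz_step Start (Inl (letter (psi x (\<sigma> x))), Inl x) (Mid (x, lideal (\<sigma> x)))"
| nz_fwd: "x \<in> X \<Longrightarrow> \<sigma> x \<noteq> z \<Longrightarrow> L \<in> lclasses \<Longrightarrow> x' \<in> X \<Longrightarrow> rep L \<cdot> \<sigma> x' \<noteq> z \<Longrightarrow>
    nz_step (Mid (x, L)) (Inl (letter (to_group (rep L \<cdot> \<sigma> x'))), Inl x') (Mid (x, lideal (\<sigma> x')))"
| nz_bwd: "x \<in> X \<Longrightarrow> \<sigma> x \<noteq> z \<Longrightarrow> x' \<in> X \<Longrightarrow> \<sigma> x' \<noteq> z \<Longrightarrow> L' \<in> lclasses \<Longrightarrow> rep L' \<cdot> \<sigma> x' \<noteq> z \<Longrightarrow>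
    nz_step (Mid (x, lideal (\<sigma> x'))) (Inr (letter (to_group (rep L' \<cdot> \<sigma> x'))), Inr x') (Mid (x, L'))"
| nz_final: "x \<in> X \<Longrightarrow> \<sigma> x \<noteq> z \<Longrightarrow> y \<in> X \<Longrightarrow> \<sigma> y \<noteq> z \<Longrightarrow> right_multiple x (\<sigma> y) \<Longrightarrow>
    nz_step (Mid (x, lideal (\<sigma> y))) (Inr (letter (psi x (\<sigma> y))), Inr y) Final"

lemma finite_nz_step: "finite {(p, l, p'). nz_step p l p'}"
proof -
  define Q :: "(nat \<times> 'a set) astate set" where "Q = {Start, Final} \<union> Mid ` (X \<times> lclasses)"
  have Q: "Start \<in> Q" "Final \<in> Q" "\<And>x L. x \<in> X \<Longrightarrow> L \<in> lclasses \<Longrightarrow> Mid (x, L) \<in> Q"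
    unfolding Q_def by auto
  have gen_class: "lideal (\<sigma> x) \<in> lclasses" if "x \<in> X" "\<sigma> x \<noteq> z" for x
    using lideal_in_lclasses that by simp
  have nonzero: "\<sigma> x \<noteq> z" if "L \<in> lclasses" "x \<in> X" "rep L \<cdot> \<sigma> x \<noteq> z" for L x
    using that rep(1) by (metis zero_right)
  have "{(p, l, p'). nz_step p l p'} \<subseteq> Q \<times> ((Inl ` Y \<union> Inr ` Y) \<times> (Inl ` X \<union> Inr ` X)) \<times> Q"
    by (auto elim!: nz_step.cases intro: Q gen_class
        simp: letter_step letter_psi right_multiple_gen dest: nonzero)
  moreover have "finite (Q \<times> ((Inl ` Y \<union> Inr ` Y) \<times> (Inl ` X \<union> Inr ` X)) \<times> Q)"
    unfolding Q_def using finite_X finite_Y finite_lclasses by simp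
  ultimately show ?thesis by (rule finite_subset)
qed

lemma run_nz_step_Final: "run nz_step Final w q \<Longrightarrow> w = []"
  by (cases w) (auto elim: nz_step.cases)

lemma nz_step_sound_step:
  assumes st: "nz_step (Mid (x, L)) ab p'" "p' \<noteq> Final"
    and b: "right_multiple x b" "b \<noteq> z" "lideal b = L" and h: "gedge (psi x b) (fst ab) h"
  shows "\<exists>b'. p' = Mid (x, lideal b') \<and> sedge b (snd ab) b' \<and> right_multiple x b' \<and> b' \<noteq> z \<and> h = psi x b'"
  using st(1)
proof cases
  case (nz_fwd x')
  then have x: "x \<in> X" "\<sigma> x \<noteq> z" and x': "L \<in> lclasses" "x' \<in> X" "rep L \<cdot> \<sigma> x' \<noteq> z" by auto
  have bS: "b \<in> S" using right_multiple_in x b by blast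
  have nz: "b \<cdot> \<sigma> x' \<noteq> z" using prod_zero_iff_rep[OF bS b(2) gen_in[OF x'(2)]] b(3) x'(3) by simp
  have "h = psi x (b \<cdot> \<sigma> x')"
    using h nz_fwd letter_step[OF x'] psi_step[OF x b(1,2) x'(2) nz] b(3) by simp
  moreover have "right_multiple x (b \<cdot> \<sigma> x')" using right_multiple_mult x(1) b(1) x'(2) by simp
  moreover have "lideal (b \<cdot> \<sigma> x') = lideal (\<sigma> x')" using lideal_mult bS x'(2) nz by simp
  ultimately show ?thesis using nz_fwd nz bS by (intro exI[of _ "b \<cdot> \<sigma> x'"]) simp
next
  case (nz_bwd x' L')
  then have x: "x \<in> X" "\<sigma> x \<noteq> z" and x': "x' \<in> X" "L = lideal (\<sigma> x')"
    and L': "L' \<in> lclasses" "rep L' \<cdot> \<sigma> x' \<noteq> z" by auto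
  let ?g = "to_group (rep L' \<cdot> \<sigma> x')"
  have bS: "b \<in> S" using right_multiple_in x b by blast
  obtain d where d: "d \<in> S" "d \<noteq> z" "lideal d = L'" "d \<cdot> \<sigma> x' = b"
    using lideal_predecessor[OF bS b(2) gen_in[OF x'(1)]] x'(2) L' b(3) by auto
  have dR: "right_multiple x d" using right_multiple_div[OF x(1) d(1) gen_in[OF x'(1)]] d(4) b by simp
  have "psi x d \<cdot> ?g = psi x b" using psi_step[OF x dR d(2) x'(1)] d(3,4) b(2) by simp
  moreover have "h \<cdot> ?g = psi x b" "h \<in> maxgroup e" using h nz_bwd letter_step[OF L'(1) x'(1) L'(2)] by auto
  moreover have "?g \<in> maxgroup e" using step_in_schreier_gens[OF L'(1) x'(1) L'(2)] schreier_gens_subset by blast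
  ultimately have "h = psi x d" using maxgroup_cancel_right psi_in[OF x dR d(2)] by metis
  then show ?thesis using nz_bwd d dR x'(1) by (intro exI[of _ d]) simp
qed (use st(2) in simp)

lemma nz_step_sound_final:
  assumes st: "nz_step (Mid (x, L)) ab Final"
    and b: "right_multiple x b" "b \<noteq> z" "lideal b = L" and h: "gedge (psi x b) (fst ab) e"
  shows "exits_from b [snd ab]"
  using st
proof cases
  case (nz_final y)
  then have x: "x \<in> X" "\<sigma> x \<noteq> z" and y: "y \<in> X" "\<sigma> y \<noteq> z" "right_multiple x (\<sigma> y)" "L = lideal (\<sigma> y)"
    by auto
  have "e \<cdot> psi x (\<sigma> y) = psi x b" using h nz_final letter_psi[OF x y(1,3,2)] by simp
  then have "psi x (\<sigma> y) = psi x b" using psi_in[OF x y(3,2)] maxgroupD(3) by simp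
  then have "\<sigma> y = b" using psi_inj[OF x y(3,2) b(1,2)] b(3) y(4) by simp
  then show ?thesis using nz_final y(1) exits_from_gen by auto
qed

lemma nz_step_sound_mid:
  "run nz_step p ls q \<Longrightarrow> q = Final \<Longrightarrow> p = Mid (x, lideal b) \<Longrightarrow> right_multiple x b \<Longrightarrow> b \<noteq> z \<Longrightarrow>
   run gedge (psi x b) (map fst ls) e \<Longrightarrow> exits_from b (map snd ls)"
proof (induction p ls q arbitrary: b rule: run.induct)
  case (run_cons p ab p' ls q)
  obtain h where h: "gedge (psi x b) (fst ab) h" "run gedge h (map fst ls) e"
    using run_cons.prems(5) by auto
  show ?case
  proof (cases "p' = Final")
    case True
    then have "ls = []" using run_nz_step_Final run_cons.hyps(2) by simp
    then show ?thesis
      using nz_step_sound_final h run_cons.hyps(1) run_cons.prems(2-4) True by auto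
  next
    case False
    then obtain b' where "p' = Mid (x, lideal b')" "sedge b (snd ab) b'" "right_multiple x b'" "b' \<noteq> z"
        "h = psi x b'"
      using nz_step_sound_step[OF _ _ run_cons.prems(3,4) refl h(1)] run_cons.hyps(1) run_cons.prems(2)
      by blast
    then show ?thesis using run_cons.IH run_cons.prems(1) h(2) exits_from_Cons[of b "snd ab" b'] by simp
  qed
qed simp

lemma nz_step_sound:
  assumes "run nz_step Start ls Final" "run gedge e (map fst ls) e"
  shows "map snd ls \<in> excursions"
proof (cases ls)
  case (Cons ab ls')
  then obtain x where x: "x \<in> X" "\<sigma> x \<noteq> z" "ab = (Inl (letter (psi x (\<sigma> x))), Inl x)"
      "run nz_step (Mid (x, lideal (\<sigma> x))) ls' Final"
    using assms(1) by (auto elim: nz_step.cases)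
  then obtain h where "gedge e (Inl (letter (psi x (\<sigma> x)))) h" "run gedge h (map fst ls') e"
    using assms(2) Cons by auto
  then have "run gedge (psi x (\<sigma> x)) (map fst ls') e"
    using letter_psi[OF x(1,2,1) right_multiple_gen x(2)] psi_in[OF x(1,2) right_multiple_gen x(2)]
      maxgroupD(3) by simp
  then have "exits_from (\<sigma> x) (map snd ls')"
    using nz_step_sound_mid[OF x(4) refl refl right_multiple_gen x(2)] by simp
  then show ?thesis using Cons x Inl_exits_from_in_excursions by simp
qed (use assms in \<open>auto elim: nz_step.cases\<close>)

lemma nz_step_complete_step:
  assumes x: "x \<in> X" "\<sigma> x \<noteq> z" and b: "right_multiple x b" "b \<noteq> z" and st: "nzedge b l b'"
  shows "right_multiple x b' \<and> (\<exists>a. nz_step (Mid (x, lideal b)) (a, l) (Mid (x, lideal b')) \<and>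
           loop_edge (maxgroup e) f Y \<tau> (Some (psi x b)) a (Some (psi x b')))"
proof -
  have step: "sedge b l b'" "b' \<noteq> z" using st unfolding nzedge_def by auto
  have bS: "b \<in> S" "b' \<in> S" using sedge_in[OF step(1)] by auto
  have L: "lideal b \<in> lclasses" "lideal b' \<in> lclasses" using lideal_in_lclasses bS b(2) step(2) by auto
  show ?thesis
  proof (cases l)
    case (Inl x')
    then have x': "x' \<in> X" "b' = b \<cdot> \<sigma> x'" using step by auto
    have nz: "rep (lideal b) \<cdot> \<sigma> x' \<noteq> z" using prod_zero_iff_rep[OF bS(1) b(2) gen_in[OF x'(1)]] x' step(2) by simp
    have b'R: "right_multiple x b'" using right_multiple_mult x(1) b(1) x' by simp
    let ?g = "to_group (rep (lideal b) \<cdot> \<sigma> x')"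
    have "lideal b' = lideal (\<sigma> x')" using lideal_mult bS(1) x' step(2) by simp
    then have "nz_step (Mid (x, lideal b)) (Inl (letter ?g), l) (Mid (x, lideal b'))"
      using nz_fwd[OF x L(1) x'(1) nz] Inl by simp
    moreover have "psi x b' = psi x b \<cdot> ?g" using psi_step[OF x b x'(1)] x' step(2) by simp
    then have "loop_edge (maxgroup e) f Y \<tau> (Some (psi x b)) (Inl (letter ?g)) (Some (psi x b'))"
      using letter_step[OF L(1) x'(1) nz] psi_in[OF x b] psi_in[OF x b'R step(2)] by simp
    ultimately show ?thesis using b'R by blast
  next
    case (Inr x')
    then have x': "x' \<in> X" "b' \<cdot> \<sigma> x' = b" using step by auto
    have b'R: "right_multiple x b'" using right_multiple_div[OF x(1) bS(2) gen_in[OF x'(1)]] x' b by simp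
    have nz: "rep (lideal b') \<cdot> \<sigma> x' \<noteq> z"
      using prod_zero_iff_rep[OF bS(2) step(2) gen_in[OF x'(1)]] x' b(2) by simp
    have sx: "\<sigma> x' \<noteq> z" using x' b(2) bS(2) by (metis zero_right)
    let ?g = "to_group (rep (lideal b') \<cdot> \<sigma> x')"
    have "lideal b = lideal (\<sigma> x')" using lideal_mult bS(2) x' b(2) by auto
    then have "nz_step (Mid (x, lideal b)) (Inr (letter ?g), l) (Mid (x, lideal b'))"
      using nz_bwd[OF x x'(1) sx L(2) nz] Inr by simp
    moreover have "psi x b = psi x b' \<cdot> ?g" using psi_step[OF x b'R step(2) x'(1)] x' b(2) by simp
    then have "loop_edge (maxgroup e) f Y \<tau> (Some (psi x b)) (Inr (letter ?g)) (Some (psi x b'))"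
      using letter_step[OF L(2) x'(1) nz] psi_in[OF x b] psi_in[OF x b'R step(2)] by simp
    ultimately show ?thesis using b'R by blast
  qed
qed

lemma nz_step_complete_mid:
  "run nzedge b w c \<Longrightarrow> c = \<sigma> y \<Longrightarrow> y \<in> X \<Longrightarrow> x \<in> X \<Longrightarrow> \<sigma> x \<noteq> z \<Longrightarrow> right_multiple x b \<Longrightarrow> b \<noteq> z \<Longrightarrow>
   \<exists>ls. run nz_step (Mid (x, lideal b)) ls Final \<and> map snd ls = w @ [Inr y] \<and>
        run (loop_edge (maxgroup e) f Y \<tau>) (Some (psi x b)) (map fst ls) None"
proof (induction b w c rule: run.induct)
  case (run_nil b)
  note x = run_nil(3,4)
  have y: "y \<in> X" "\<sigma> y \<noteq> z" "right_multiple x (\<sigma> y)" using run_nil by auto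
  let ?ls = "[(Inr (letter (psi x (\<sigma> y))), Inr y)]"
  have "run nz_step (Mid (x, lideal b)) ?ls Final" using nz_final[OF x y(1,2,3)] run_nil(1) by simp
  moreover have "run (loop_edge (maxgroup e) f Y \<tau>) (Some (psi x b)) (map fst ?ls) None"
    using letter_psi[OF x y(1,3,2)] psi_in[OF x y(3,2)] run_nil(1) by simp
  ultimately show ?case by (intro exI[of _ ?ls]) simp
next
  case (run_cons b l b' w c)
  obtain a where b': "right_multiple x b'" "nz_step (Mid (x, lideal b)) (a, l) (Mid (x, lideal b'))"
      "loop_edge (maxgroup e) f Y \<tau> (Some (psi x b)) a (Some (psi x b'))"
    using nz_step_complete_step[OF run_cons.prems(3-6) run_cons.hyps(1)] by blast
  moreover have "b' \<noteq> z" using run_cons.hyps(1) unfolding nzedge_def by simp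
  ultimately obtain ls where ls: "run nz_step (Mid (x, lideal b')) ls Final" "map snd ls = w @ [Inr y]"
      "run (loop_edge (maxgroup e) f Y \<tau>) (Some (psi x b')) (map fst ls) None"
    using run_cons.IH run_cons.prems(1-4) by blast
  have "run nz_step (Mid (x, lideal b)) ((a, l) # ls) Final" using run.run_cons[OF b'(2) ls(1)] .
  moreover have "run (loop_edge (maxgroup e) f Y \<tau>) (Some (psi x b)) (map fst ((a, l) # ls)) None"
    using run.run_cons[OF b'(3) ls(3)] by simp
  ultimately show ?case using ls(2) by (intro exI[of _ "(a, l) # ls"]) (simp del: run_Cons_iff)
qed

lemma nz_step_complete:
  assumes x: "x \<in> X" "\<sigma> x \<noteq> z" and y: "y \<in> X" and run: "run nzedge (\<sigma> x) w (\<sigma> y)"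
  shows "\<exists>ls. run nz_step Start ls Final \<and> map snd ls = Inl x # w @ [Inr y] \<and>
             map fst ls \<in> loop_problem (maxgroup e) f Y \<tau>"
proof -
  obtain ls where ls: "run nz_step (Mid (x, lideal (\<sigma> x))) ls Final" "map snd ls = w @ [Inr y]"
      "run (loop_edge (maxgroup e) f Y \<tau>) (Some (psi x (\<sigma> x))) (map fst ls) None"
    using nz_step_complete_mid[OF run refl y x right_multiple_gen x(2)] by blast
  let ?ab = "(Inl (letter (psi x (\<sigma> x))), Inl x)"
  have "loop_edge (maxgroup e) f Y \<tau> None (fst ?ab) (Some (psi x (\<sigma> x)))"
    using letter_psi[OF x x(1) right_multiple_gen x(2)] psi_in[OF x right_multiple_gen x(2)] by simp
  then have "map fst (?ab # ls) \<in> loop_problem (maxgroup e) f Y \<tau>"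
    using ls(3) unfolding loop_problem_maxgroup by auto
  moreover have "run nz_step Start (?ab # ls) Final" using nz_start[OF x] ls(1) by auto
  ultimately show ?thesis using ls(2) by (intro exI[of _ "?ab # ls"]) simp
qed

lemma excursions_decompose:
  "excursions = {map snd ls | ls. run nz_step Start ls Final \<and> map fst ls \<in> loop_problem (maxgroup e) f Y \<tau>}
              \<union> {w. run zero_step Start w Final}" (is "_ = ?NZ \<union> ?Z")
proof (intro equalityI subsetI)
  fix u assume "u \<in> excursions"
  then obtain x y w where u: "u = Inl x # w @ [Inr y]" "x \<in> X" "y \<in> X" "run sedge (\<sigma> x) w (\<sigma> y)"
    unfolding excursions_def by blast
  from run_sedge_split[OF u(4)] show "u \<in> ?NZ \<union> ?Z"
  proof (elim disjE conjE exE)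
    assume "\<sigma> x \<noteq> z" "run nzedge (\<sigma> x) w (\<sigma> y)"
    then obtain ls where "run nz_step Start ls Final" "map snd ls = u"
        "map fst ls \<in> loop_problem (maxgroup e) f Y \<tau>"
      using nz_step_complete u(1-3) by metis
    then show ?thesis by blast
  next
    fix w1 w2 assume "w = w1 @ w2" "run sedge (\<sigma> x) w1 z" "run sedge z w2 (\<sigma> y)"
    then show ?thesis using zero_step_complete u(1-3) by simp
  qed
next
  fix u assume "u \<in> ?NZ \<union> ?Z"
  then show "u \<in> excursions"
  proof
    assume "u \<in> ?NZ"
    then obtain ls where "u = map snd ls" "run nz_step Start ls Final"
        "run (loop_edge (maxgroup e) f Y \<tau>) None (map fst ls) None"
      unfolding loop_problem_maxgroup by blast
    then show ?thesis using nz_step_sound run_loop_edge_gedge by blast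
  qed (use zero_step_sound in blast)
qed

lemma loop_problem_in_family:
  assumes rat: "closed_rat_trans F" and "closed_union F" and "closed_star F"
    and H: "map enc_letter ` loop_problem (maxgroup e) f Y \<tau> \<in> F"
  shows "map enc_letter ` loop_problem S f X \<sigma> \<in> F"
proof -
  have "map enc_letter ` {map snd ls | ls. run nz_step Start ls Final \<and> map fst ls \<in> loop_problem (maxgroup e) f Y \<tau>} \<in> F"
    using letter_transduction_in_family[OF finite_nz_step inj_enc_letter H rat] .
  moreover have "[] \<in> map enc_letter ` loop_problem (maxgroup e) f Y \<tau>"
    unfolding loop_problem_maxgroup by force
  then have "map enc_letter ` {w. run zero_step Start w Final} \<in> F"
    using automaton_language_in_family[OF finite_zero_step H _ rat] by blast
  ultimately have "map enc_letter ` excursions \<in> F"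
    using assms(2) unfolding excursions_decompose image_Un closed_union_def by blast
  then show ?thesis
    using assms(3) unfolding loop_problem_eq_star_excursions image_kleene_star closed_star_def by blast
qed

end

section \<open>The loop problem of the maximal subgroup\<close>

lemma finite_generators_extend:
  assumes gen: "finite_generators S f X \<sigma>" and Y: "finite Y" "\<tau> ` Y \<subseteq> S"
  obtains X' \<sigma>' where "finite_generators S f X' \<sigma>'" "Y \<subseteq> X'" "\<forall>j\<in>Y. \<sigma>' j = \<tau> j"
proof -
  have X: "finite X" "\<forall>x\<in>X. \<sigma> x \<in> S" "\<forall>s\<in>S. \<exists>w. w \<noteq> [] \<and> set w \<subseteq> X \<and> word_val f \<sigma> w = s"
    using gen unfolding finite_generators_def by auto
  define m where "m = Suc (Max (insert 0 Y))"
  have outside: "x + m \<notin> Y" for x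
  proof
    assume "x + m \<in> Y"
    then have "x + m \<le> Max (insert 0 Y)" using Y(1) by simp
    then show False unfolding m_def by simp
  qed
  define X' where "X' = Y \<union> (\<lambda>x. x + m) ` X"
  define \<sigma>' where "\<sigma>' n = (if n \<in> Y then \<tau> n else \<sigma> (n - m))" for n
  have shift: "\<sigma>' (x + m) = \<sigma> x" for x unfolding \<sigma>'_def using outside by simp
  have "finite_generators S f X' \<sigma>'" unfolding finite_generators_def
  proof (intro conjI ballI)
    show "finite X'" unfolding X'_def using Y(1) X(1) by simp
    show "\<sigma>' x \<in> S" if x: "x \<in> X'" for x
    proof (cases "x \<in> Y")
      case True
      then show ?thesis using Y(2) unfolding \<sigma>'_def by auto
    next
      case False
      then obtain x0 where "x0 \<in> X" "x = x0 + m" using x unfolding X'_def by blast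
      then show ?thesis using shift X(2) by simp
    qed
    show "\<exists>w. w \<noteq> [] \<and> set w \<subseteq> X' \<and> word_val f \<sigma>' w = s" if s: "s \<in> S" for s
    proof -
      obtain w where w: "w \<noteq> []" "set w \<subseteq> X" "word_val f \<sigma> w = s" using X(3) s by blast
      have "map \<sigma>' (map (\<lambda>x. x + m) w) = map \<sigma> w" using shift by (induction w) auto
      then have "word_val f \<sigma>' (map (\<lambda>x. x + m) w) = s" using w(3) by (simp only: word_val_eq_lprod)
      moreover have "set (map (\<lambda>x. x + m) w) \<subseteq> X'" using w(2) unfolding X'_def by auto
      ultimately show ?thesis using w(1) by (intro exI[of _ "map (\<lambda>x. x + m) w"]) simp
    qed
  qed
  moreover have "Y \<subseteq> X'" "\<forall>j\<in>Y. \<sigma>' j = \<tau> j" unfolding X'_def \<sigma>'_def by auto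
  ultimately show ?thesis using that by blast
qed

context czs_idempotent
begin

definition anchored :: "'a \<Rightarrow> bool" where
  "anchored b \<longleftrightarrow> b \<in> S \<and> e \<cdot> b = b \<and> b \<cdot> e \<noteq> z"

lemma anchored_maxgroup:
  assumes "anchored b" shows "b \<cdot> e \<in> maxgroup e"
proof -
  have b: "b \<in> S" "e \<cdot> b = b" "b \<cdot> e \<noteq> z" using assms unfolding anchored_def by auto
  then have "e \<cdot> (b \<cdot> e) = b \<cdot> e" by (simp flip: assoc)
  moreover have "b \<cdot> e \<cdot> e = b \<cdot> e" using b by (simp add: assoc)
  ultimately show ?thesis unfolding maxgroup_def using b by simp
qed

lemma maxgroup_anchored: "h \<in> maxgroup e \<Longrightarrow> anchored h"
  unfolding anchored_def maxgroup_def by simp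

lemma anchored_mult:
  assumes b: "anchored b" and g: "g \<in> maxgroup e"
  shows "b \<cdot> g = (b \<cdot> e) \<cdot> g" "anchored (b \<cdot> g)"
proof -
  note gS = maxgroupD[OF g] and bS = b[unfolded anchored_def]
  show eq: "b \<cdot> g = (b \<cdot> e) \<cdot> g" using gS bS by (simp add: assoc)
  have "b \<cdot> g \<in> maxgroup e" using eq maxgroup_mult[OF anchored_maxgroup[OF b] g] by simp
  then show "anchored (b \<cdot> g)" by (rule maxgroup_anchored)
qed

lemma anchored_div:
  assumes b: "b \<in> S" and g: "g \<in> maxgroup e" and bg: "anchored (b \<cdot> g)"
  shows "anchored b"
proof -
  note gS = maxgroupD[OF g] and bgS = bg[unfolded anchored_def]
  have "b \<cdot> g \<noteq> z"
  proof
    assume "b \<cdot> g = z"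
    then show False using bgS by simp
  qed
  then obtain t where t: "t \<in> S" "b = b \<cdot> g \<cdot> t" using R_equiv_prod b gS(1) by blast
  then have "e \<cdot> b = b" using bgS b gS(1) by (metis assoc idem_in)
  moreover have "b \<cdot> e \<noteq> z"
  proof
    assume "b \<cdot> e = z"
    then have "b \<cdot> g = z" using b gS by (metis assoc idem_in zero_left)
    then show False using \<open>b \<cdot> g \<noteq> z\<close> by simp
  qed
  ultimately show ?thesis unfolding anchored_def using b by simp
qed

lemma loop_edge_maxgroup_Inl:
  assumes j: "j \<in> Y" "\<tau> j \<in> maxgroup e" and p: "pred_option anchored p"
  shows "pred_option anchored (act1 f p (\<tau> j)) \<and>
    loop_edge (maxgroup e) f Y \<tau> (map_option (\<lambda>b. b \<cdot> e) p) (Inl j) (map_option (\<lambda>b. b \<cdot> e) (act1 f p (\<tau> j)))"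
proof (cases p)
  case None
  then show ?thesis using j maxgroup_anchored maxgroupD[OF j(2)] by simp
next
  case (Some b)
  then have b: "anchored b" "b \<in> S" using p unfolding anchored_def by auto
  note bj = anchored_mult[OF b(1) j(2)]
  have "b \<cdot> \<tau> j \<cdot> e = b \<cdot> e \<cdot> \<tau> j" using bj(1) b(2) maxgroupD[OF j(2)] by (simp add: assoc)
  then show ?thesis
    using Some j(1) bj(2) anchored_maxgroup[OF b(1)] maxgroup_mult[OF anchored_maxgroup[OF b(1)] j(2)] by simp
qed

lemma loop_edge_maxgroup_Inr:
  assumes j: "j \<in> Y" "\<tau> j \<in> maxgroup e" and q: "q \<in> vertices1 S" "pred_option anchored (act1 f q (\<tau> j))"
  shows "pred_option anchored q \<and>
    loop_edge (maxgroup e) f Y \<tau> (map_option (\<lambda>b. b \<cdot> e) (act1 f q (\<tau> j))) (Inr j) (map_option (\<lambda>b. b \<cdot> e) q)"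
proof (cases q)
  case None
  then show ?thesis using j maxgroupD[OF j(2)] by simp
next
  case (Some b')
  then have b': "b' \<in> S" "anchored (b' \<cdot> \<tau> j)" using q by auto
  have b'a: "anchored b'" using anchored_div[OF b'(1) j(2) b'(2)] .
  have "b' \<cdot> \<tau> j \<cdot> e = b' \<cdot> e \<cdot> \<tau> j"
    using anchored_mult(1)[OF b'a j(2)] b'(1) maxgroupD[OF j(2)] by (simp add: assoc)
  then show ?thesis
    using Some b'a j(1) anchored_maxgroup[OF b'a] anchored_maxgroup[OF b'(2)] by simp
qed

text \<open>Right multiplication by e maps the vertices of such a loop into the maximal subgroup.\<close>

lemma run_loop_edge_maxgroup:
  assumes \<tau>: "\<forall>j\<in>Y. \<tau> j \<in> maxgroup e" "\<forall>j\<in>Y. \<sigma> j = \<tau> j"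
    and run: "run (loop_edge S f X \<sigma>) None w None" and w: "set w \<subseteq> Inl ` Y \<union> Inr ` Y"
  shows "run (loop_edge (maxgroup e) f Y \<tau>) None w None"
proof -
  define P where "P p p' \<longleftrightarrow> p' = map_option (\<lambda>b. b \<cdot> e) p \<and> pred_option anchored p" for p p'
  have step: "\<exists>q'. loop_edge (maxgroup e) f Y \<tau> p' l q' \<and> P q q'"
    if "loop_edge S f X \<sigma> p l q \<and> l \<in> Inl ` Y \<union> Inr ` Y" "P p p'" for p l q p'
  proof (cases l)
    case (Inl j)
    then have "j \<in> Y" "q = act1 f p (\<tau> j)" using that(1) \<tau>(2) by auto
    then show ?thesis using loop_edge_maxgroup_Inl \<tau>(1) that(2) Inl unfolding P_def by blast
  next
    case (Inr j)
    then have "j \<in> Y" "p = act1 f q (\<tau> j)" "q \<in> vertices1 S" using that(1) \<tau>(2) by auto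
    then show ?thesis using loop_edge_maxgroup_Inr \<tau>(1) that(2) Inr unfolding P_def by blast
  qed
  have "P None None" unfolding P_def by simp
  then obtain q' where "run (loop_edge (maxgroup e) f Y \<tau>) None w q'" "P None q'"
    using run_simulation[OF run_restrict[OF run w], where P = P and s = None
        and R' = "loop_edge (maxgroup e) f Y \<tau>"] step by blast
  then show ?thesis unfolding P_def by simp
qed

lemma loop_problem_maxgroup_restrict:
  assumes H: "finite_generators (maxgroup e) f Y \<tau>" and G: "finite_generators S f X \<sigma>"
    and "Y \<subseteq> X" and agree: "\<forall>j\<in>Y. \<sigma> j = \<tau> j"
  shows "loop_problem (maxgroup e) f Y \<tau> = {w \<in> loop_problem S f X \<sigma>. set w \<subseteq> Inl ` Y \<union> Inr ` Y}"
proof -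
  have \<tau>: "\<forall>j\<in>Y. \<tau> j \<in> maxgroup e" using H unfolding finite_generators_def by simp
  have LH: "loop_problem (maxgroup e) f Y \<tau> = {w. run (loop_edge (maxgroup e) f Y \<tau>) None w None}"
    using \<tau> maxgroup_mult by (intro loop_problem_eq_run) auto
  have LS: "loop_problem S f X \<sigma> = {w. run (loop_edge S f X \<sigma>) None w None}"
    using G unfolding finite_generators_def by (intro loop_problem_eq_run) auto
  have "vertices1 (maxgroup e) \<subseteq> vertices1 S" using maxgroupD(1) unfolding vertices1_def by blast
  then have mono: "loop_edge S f X \<sigma> p l q" if "loop_edge (maxgroup e) f Y \<tau> p l q" for p l q
    using that assms(3) agree by (cases l) auto
  have labels: "l \<in> Inl ` Y \<union> Inr ` Y" if "loop_edge (maxgroup e) f Y \<tau> p l q" for p l q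
    using that by (cases l) auto
  show ?thesis unfolding LH LS
  proof (intro set_eqI iffI)
    fix w assume "w \<in> {w. run (loop_edge (maxgroup e) f Y \<tau>) None w None}"
    then have r: "run (loop_edge (maxgroup e) f Y \<tau>) None w None" by simp
    then have "run (loop_edge S f X \<sigma>) None w None" using run_mono[OF r mono] by simp
    moreover have "set w \<subseteq> Inl ` Y \<union> Inr ` Y" using run_labels[OF r labels] .
    ultimately show "w \<in> {w \<in> {w. run (loop_edge S f X \<sigma>) None w None}. set w \<subseteq> Inl ` Y \<union> Inr ` Y}"
      by simp
  next
    fix w assume "w \<in> {w \<in> {w. run (loop_edge S f X \<sigma>) None w None}. set w \<subseteq> Inl ` Y \<union> Inr ` Y}"
    then show "w \<in> {w. run (loop_edge (maxgroup e) f Y \<tau>) None w None}"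
      using run_loop_edge_maxgroup[OF \<tau> agree] by blast
  qed
qed

lemma maxgroup_has_loop_problem:
  assumes rat: "closed_rat_trans F" and S: "has_loop_problem_in F S f"
  shows "has_loop_problem_in F (maxgroup e) f"
proof -
  have "fin_generated S f" using S unfolding has_loop_problem_in_def by simp
  then obtain X \<sigma> where gen: "finite_generators S f X \<sigma>" unfolding fin_generated_def by blast
  interpret czs_generated S f z e X \<sigma> using gen by unfold_locales
  have "map enc_letter ` loop_problem (maxgroup e) f Y \<tau> \<in> F"
    if H: "finite_generators (maxgroup e) f Y \<tau>" for Y \<tau>
  proof -
    have "finite Y \<and> (\<forall>j\<in>Y. \<tau> j \<in> maxgroup e)" using H unfolding finite_generators_def by simp
    then have Y: "finite Y" "\<tau> ` Y \<subseteq> S" using maxgroupD(1) by auto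
    obtain X' \<sigma>' where G: "finite_generators S f X' \<sigma>'" "Y \<subseteq> X'" "\<forall>j\<in>Y. \<sigma>' j = \<tau> j"
      using finite_generators_extend[OF gen Y] by blast
    have "map enc_letter ` loop_problem S f X' \<sigma>' \<in> F"
      using S G(1) unfolding has_loop_problem_in_def by blast
    moreover have "finite (Inl ` Y \<union> Inr ` Y)" using Y(1) by simp
    ultimately have "map enc_letter ` {w \<in> loop_problem S f X' \<sigma>'. set w \<subseteq> Inl ` Y \<union> Inr ` Y} \<in> F"
      using restrict_alphabet_in_family[OF inj_enc_letter _ _ rat] by blast
    then show ?thesis using loop_problem_maxgroup_restrict[OF H G] by simp
  qed
  then show ?thesis unfolding has_loop_problem_in_def using fin_generated_maxgroup by blast
qed

lemma has_loop_problem_of_maxgroup: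
  assumes "closed_rat_trans F" "closed_union F" "closed_star F" "fin_generated S f"
    and H: "has_loop_problem_in F (maxgroup e) f"
  shows "has_loop_problem_in F S f"
proof -
  have "map enc_letter ` loop_problem S f X \<sigma> \<in> F" if gen: "finite_generators S f X \<sigma>" for X \<sigma>
  proof -
    interpret czs_generated S f z e X \<sigma> using gen by unfold_locales
    obtain Y :: "nat set" and \<tau> where Y: "finite Y" "\<tau> ` Y = schreier_gens" by (rule schreier_alphabet)
    then interpret czs_group_alphabet S f z e X \<sigma> Y \<tau> by unfold_locales
    have "map enc_letter ` loop_problem (maxgroup e) f Y \<tau> \<in> F"
      using H finite_generators_maxgroup[OF Y] unfolding has_loop_problem_in_def by blast
    then show ?thesis using loop_problem_in_family assms(1-3) by blast
  qed
  then show ?thesis using assms(4) unfolding has_loop_problem_in_def by blast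
qed

end

theorem theorem6p1:
  fixes F :: "nat list set set" and S :: "'a set" and f :: "'a \<Rightarrow> 'a \<Rightarrow> 'a" and z :: 'a
  assumes "language_family F"
    and "closed_union F" and "closed_rat_trans F" and "closed_product F" and "closed_star F"
    and "completely_zero_simple S f z" and "fin_generated S f"
  shows "(has_loop_problem_in F S f \<longleftrightarrow>
            (\<exists>H. nonzero_max_subgroup S f z H \<and> has_loop_problem_in F H f))
       \<and> (has_loop_problem_in F S f \<longleftrightarrow>
            (\<forall>H. nonzero_max_subgroup S f z H \<longrightarrow> has_loop_problem_in F H f))"
proof -
  interpret czs_semigroup S f z using assms(6) by unfold_locales
  have S_to_H: "has_loop_problem_in F H f"
    if "has_loop_problem_in F S f" "nonzero_max_subgroup S f z H" for H
    using nonzero_max_subgroup_eq_maxgroup[OF that(2)]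
      czs_idempotent.maxgroup_has_loop_problem[OF _ assms(3) that(1)] by blast
  have H_to_S: "has_loop_problem_in F S f"
    if "nonzero_max_subgroup S f z H" "has_loop_problem_in F H f" for H
    using nonzero_max_subgroup_eq_maxgroup[OF that(1)]
      czs_idempotent.has_loop_problem_of_maxgroup[OF _ assms(3,2,5,7)] that(2) by blast
  show ?thesis using S_to_H H_to_S nonzero_max_subgroup_exists by blast
qed

end
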